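(* Let $G$ be a graph that is $2$-cell embedded in a closed orientable surface $S$ of genus $g$, and let $\mathcal C$ be a peripheral family of cycles of $G$. If none of the cycles in $\mathcal C$ is facial in this embedding, then $|\mathcal C|\le g$.
   Context: Graphs are finite, simple and connected. A cycle $C$ of $G$ is peripheral if it is an induced cycle (has no chords in $G$) and is non-separating, i.e. $G-V(C)$ is connected. A family $\mathcal C$ of cycles of $G$ is a peripheral family if every cycle in it is peripheral, any two cycles in $\mathcal C$ are vertex-disjoint and nonadjacent (no edge of $G$ joins them), and $G-\bigcup\{V(C): C\in\mathcal C\}$ is connected. A cycle is facial in an embedding if it bounds a face of the embedding. *)

theory Defs
  imports Main
begin

definition connected_set :: "('v \<Rightarrow> 'v \<Rightarrow> bool) \<Rightarrow> 'v set \<Rightarrow> bool" where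
  "connected_set E W \<longleftrightarrow>
     (\<forall>u\<in>W. \<forall>v\<in>W. (\<lambda>x y. E x y \<and> x \<in> W \<and> y \<in> W)\<^sup>*\<^sup>* u v)"

definition simple_graph :: "'v set \<Rightarrow> ('v \<Rightarrow> 'v \<Rightarrow> bool) \<Rightarrow> bool" where
  "simple_graph V E \<longleftrightarrow> finite V \<and> V \<noteq> {} \<and>
     (\<forall>u v. E u v \<longrightarrow> u \<in> V \<and> v \<in> V \<and> u \<noteq> v \<and> E v u)"

definition connected_graph :: "'v set \<Rightarrow> ('v \<Rightarrow> 'v \<Rightarrow> bool) \<Rightarrow> bool" where
  "connected_graph V E \<longleftrightarrow> simple_graph V E \<and> connected_set E V"

definition edges :: "('v \<Rightarrow> 'v \<Rightarrow> bool) \<Rightarrow> 'v set set" where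
  "edges E = {{u, v} | u v. E u v}"

text \<open>An orientable
  2-cell embedding is described (Heffter--Edmonds--Ringel) by a rotation system:
  a permutation of the darts that at each vertex cyclically permutes the darts
  leaving that vertex.\<close>

definition darts :: "('v \<Rightarrow> 'v \<Rightarrow> bool) \<Rightarrow> ('v \<times> 'v) set" where
  "darts E = {(u, v). E u v}"

definition rev_dart :: "'v \<times> 'v \<Rightarrow> 'v \<times> 'v" where
  "rev_dart d = (snd d, fst d)"

definition rotation_system ::
  "'v set \<Rightarrow> ('v \<Rightarrow> 'v \<Rightarrow> bool) \<Rightarrow> ('v \<times> 'v \<Rightarrow> 'v \<times> 'v) \<Rightarrow> bool" where
  "rotation_system V E \<rho> \<longleftrightarrow>
     bij_betw \<rho> (darts E) (darts E) \<and>
     (\<forall>d\<in>darts E. fst (\<rho> d) = fst d) \<and>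
     (\<forall>d\<in>darts E. \<forall>d'\<in>darts E. fst d = fst d' \<longrightarrow> (\<exists>n. (\<rho> ^^ n) d = d'))"

definition orbit :: "('a \<Rightarrow> 'a) \<Rightarrow> 'a \<Rightarrow> 'a set" where
  "orbit f x = {(f ^^ n) x | n. True}"

definition face_perm :: "('v \<times> 'v \<Rightarrow> 'v \<times> 'v) \<Rightarrow> 'v \<times> 'v \<Rightarrow> 'v \<times> 'v" where
  "face_perm \<rho> = \<rho> \<circ> rev_dart"

definition faces :: "('v \<Rightarrow> 'v \<Rightarrow> bool) \<Rightarrow> ('v \<times> 'v \<Rightarrow> 'v \<times> 'v) \<Rightarrow> ('v \<times> 'v) set set" where
  "faces E \<rho> = orbit (face_perm \<rho>) ` darts E"

text \<open>Number of faces; an edgeless (one-vertex) graph has a single face.\<close>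

definition num_faces :: "('v \<Rightarrow> 'v \<Rightarrow> bool) \<Rightarrow> ('v \<times> 'v \<Rightarrow> 'v \<times> 'v) \<Rightarrow> nat" where
  "num_faces E \<rho> = (if darts E = {} then 1 else card (faces E \<rho>))"

text \<open>G (given by V, E) is 2-cell embedded in the closed orientable surface of
  genus g via rotation system \<rho>: Euler's formula V - E + F = 2 - 2g.\<close>

definition orientable_embedding ::
  "'v set \<Rightarrow> ('v \<Rightarrow> 'v \<Rightarrow> bool) \<Rightarrow> ('v \<times> 'v \<Rightarrow> 'v \<times> 'v) \<Rightarrow> nat \<Rightarrow> bool" where
  "orientable_embedding V E \<rho> g \<longleftrightarrow>
     connected_graph V E \<and> rotation_system V E \<rho> \<and>
     int (card V) - int (card (edges E)) + int (num_faces E \<rho>) = 2 - 2 * int g"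

definition cyc_darts :: "'v list \<Rightarrow> ('v \<times> 'v) set" where
  "cyc_darts xs = {(xs ! i, xs ! ((i + 1) mod length xs)) | i. i < length xs}"

definition is_cycle :: "'v set \<Rightarrow> ('v \<Rightarrow> 'v \<Rightarrow> bool) \<Rightarrow> 'v list \<Rightarrow> bool" where
  "is_cycle V E xs \<longleftrightarrow> length xs \<ge> 3 \<and> distinct xs \<and> set xs \<subseteq> V \<and>
     (\<forall>i < length xs. E (xs ! i) (xs ! ((i + 1) mod length xs)))"

definition induced_cycle :: "'v set \<Rightarrow> ('v \<Rightarrow> 'v \<Rightarrow> bool) \<Rightarrow> 'v list \<Rightarrow> bool" where
  "induced_cycle V E xs \<longleftrightarrow> is_cycle V E xs \<and>
     (\<forall>u\<in>set xs. \<forall>v\<in>set xs. E u v \<longrightarrow> (u, v) \<in> cyc_darts xs \<or> (v, u) \<in> cyc_darts xs)"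

definition peripheral_cycle :: "'v set \<Rightarrow> ('v \<Rightarrow> 'v \<Rightarrow> bool) \<Rightarrow> 'v list \<Rightarrow> bool" where
  "peripheral_cycle V E xs \<longleftrightarrow> induced_cycle V E xs \<and> connected_set E (V - set xs)"

definition peripheral_family :: "'v set \<Rightarrow> ('v \<Rightarrow> 'v \<Rightarrow> bool) \<Rightarrow> 'v list set \<Rightarrow> bool" where
  "peripheral_family V E \<C> \<longleftrightarrow>
     (\<forall>C\<in>\<C>. peripheral_cycle V E C) \<and>
     (\<forall>C\<in>\<C>. \<forall>C'\<in>\<C>. C \<noteq> C' \<longrightarrow>
        set C \<inter> set C' = {} \<and> (\<forall>u\<in>set C. \<forall>v\<in>set C'. \<not> E u v)) \<and>
     connected_set E (V - (\<Union>C\<in>\<C>. set C))"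

definition facial :: "('v \<Rightarrow> 'v \<Rightarrow> bool) \<Rightarrow> ('v \<times> 'v \<Rightarrow> 'v \<times> 'v) \<Rightarrow> 'v list \<Rightarrow> bool" where
  "facial E \<rho> xs \<longleftrightarrow> cyc_darts xs \<in> faces E \<rho> \<or> cyc_darts (rev xs) \<in> faces E \<rho>"

end

theory Submission
  imports Defs "HOL-Combinatorics.Transposition"
begin

text \<open>The embedding is the hypermap given by the rotation \<open>\<rho>\<close> and the dart reversal, its faces
  being the orbits of \<open>\<rho> \<circ> rev_dart\<close>. Cut the surface open along the \<open>k\<close> cycles of the family:
  every cycle vertex and every cycle edge is doubled, and the two sides of each cycle become
  new faces. Because the cycles are peripheral and non-facial, the cut hypermap is still
  connected, so Euler's inequality \<open>V - E + F \<le> 2\<close> for connected hypermaps applies to it. With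
  \<open>c\<close> cycle vertices (and as many cycle edges) this reads
  \<open>(|V| + c) - (|E| + c) + (F + 2 k) \<le> 2\<close>, and \<open>|V| - |E| + F = 2 - 2 g\<close> gives \<open>k \<le> g\<close>.\<close>

section \<open>Orbits of permutations of finite sets\<close>

definition finite_perm :: "('a \<Rightarrow> 'a) \<Rightarrow> 'a set \<Rightarrow> bool" where
  "finite_perm f D \<longleftrightarrow> finite D \<and> f ` D \<subseteq> D \<and> inj_on f D"

definition orbits :: "('a \<Rightarrow> 'a) \<Rightarrow> 'a set \<Rightarrow> 'a set set" where
  "orbits f D = orbit f ` D"

lemma funpow_mem: "f ` D \<subseteq> D \<Longrightarrow> x \<in> D \<Longrightarrow> (f ^^ n) x \<in> D"
  by (induction n) auto

lemma orbit_iff: "y \<in> orbit f x \<longleftrightarrow> (\<exists>n. y = (f ^^ n) x)"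
  unfolding orbit_def by auto

lemma self_in_orbit: "x \<in> orbit f x"
  unfolding orbit_iff by (metis funpow_0)

lemma orbit_step: "y \<in> orbit f x \<Longrightarrow> f y \<in> orbit f x"
  unfolding orbit_iff by (metis funpow.simps(2) comp_apply)

lemma apply_in_orbit: "f x \<in> orbit f x"
  by (rule orbit_step[OF self_in_orbit])

lemma orbit_subset:
  assumes "x \<in> S" "\<And>y. y \<in> S \<Longrightarrow> f y \<in> S"
  shows "orbit f x \<subseteq> S"
  using funpow_mem[of f S x] assms by (auto simp: orbit_iff image_subset_iff)

lemma orbit_subset_orbit: "y \<in> orbit f x \<Longrightarrow> orbit f y \<subseteq> orbit f x"
  by (rule orbit_subset) (auto intro: orbit_step)

lemma orbit_fixpoint: "f z = z \<Longrightarrow> orbit f z = {z}"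
  using orbit_subset[of z "{z}" f] self_in_orbit[of z f] by auto

lemma orbit_involution: "f (f z) = z \<Longrightarrow> orbit f z = {z, f z}"
  using orbit_subset[of z "{z, f z}" f] self_in_orbit[of z f] apply_in_orbit[of f z] by auto

lemma orbit_cong:
  assumes "x \<in> S" "\<And>y. y \<in> S \<Longrightarrow> f y = g y" "\<And>y. y \<in> S \<Longrightarrow> f y \<in> S"
  shows "orbit f x = orbit g x"
proof -
  have "(f ^^ n) x = (g ^^ n) x \<and> (f ^^ n) x \<in> S" for n
    by (induction n) (use assms in auto)
  then show ?thesis unfolding orbit_def by metis
qed

lemma finite_perm_comp: "finite_perm \<alpha> D \<Longrightarrow> finite_perm \<beta> D \<Longrightarrow> finite_perm (\<alpha> \<circ> \<beta>) D"
  unfolding finite_perm_def by (auto simp: image_comp[symmetric] intro: comp_inj_on inj_on_subset)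

lemma finite_perm_comp_transpose:
  assumes "finite_perm \<pi> D" "x \<in> D" "y \<in> D"
  shows "finite_perm (\<pi> \<circ> transpose x y) D"
proof -
  have "finite_perm (transpose x y) D"
    using assms by (auto simp: finite_perm_def transpose_def)
  then show ?thesis using assms(1) finite_perm_comp by blast
qed

text \<open>A finite permutation maps each of its orbits onto itself, so \<open>f x\<close> has a preimage in
  \<open>orbit f (f x)\<close>, which by injectivity is \<open>x\<close>.\<close>

lemma self_in_orbit_apply:
  assumes "finite_perm f D" "x \<in> D"
  shows "x \<in> orbit f (f x)"
proof -
  let ?O = "orbit f (f x)"
  have sub: "f ` D \<subseteq> D" and inj: "inj_on f D" using assms(1) by (auto simp: finite_perm_def)
  have OD: "?O \<subseteq> D" by (rule orbit_subset) (use assms(2) sub in auto)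
  have "f ` ?O = ?O"
    by (rule endo_inj_surj)
      (use OD assms(1) in \<open>auto simp: finite_perm_def intro: finite_subset orbit_step inj_on_subset\<close>)
  then obtain y where "y \<in> ?O" "f y = f x" using self_in_orbit[of "f x" f] by (metis imageE)
  then show ?thesis using inj OD assms(2) by (metis inj_onD subsetD)
qed

lemma orbit_sym:
  assumes "finite_perm f D" "x \<in> D" "y \<in> orbit f x"
  shows "x \<in> orbit f y"
proof -
  have sub: "f ` D \<subseteq> D" using assms(1) by (auto simp: finite_perm_def)
  have "x \<in> orbit f ((f ^^ n) x)" for n
  proof (induction n)
    case 0 then show ?case by (simp add: self_in_orbit)
  next
    case (Suc n)
    have "(f ^^ n) x \<in> orbit f ((f ^^ Suc n) x)"
      using self_in_orbit_apply[OF assms(1) funpow_mem[OF sub assms(2)]] by simp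
    then show ?case using Suc.IH orbit_subset_orbit by (metis subsetD)
  qed
  moreover obtain n where "y = (f ^^ n) x" using assms(3) by (auto simp: orbit_iff)
  ultimately show ?thesis by simp
qed

lemma orbit_eq:
  assumes "finite_perm f D" "x \<in> D" "y \<in> orbit f x"
  shows "orbit f y = orbit f x"
  using orbit_subset_orbit[OF assms(3)] orbit_subset_orbit[OF orbit_sym[OF assms]] by blast

lemma orbit_eq_iff:
  assumes "finite_perm f D" "x \<in> D" "y \<in> D"
  shows "y \<in> orbit f x \<longleftrightarrow> orbit f y = orbit f x"
  using orbit_eq[OF assms(1,2), of y] self_in_orbit[of y f] by auto

lemma orbit_eq_if_meet:
  assumes "finite_perm f D" "x \<in> D" "y \<in> D" "z \<in> orbit f x" "z \<in> orbit f y"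
  shows "orbit f x = orbit f y"
  using orbit_eq[OF assms(1,2,4)] orbit_eq[OF assms(1,3,5)] by simp

lemma orbit_reach:
  assumes "s \<in> W" "a \<in> orbit f s"
    and "\<And>w. w \<in> W \<Longrightarrow> w \<in> orbit f s \<Longrightarrow> w \<noteq> a \<Longrightarrow> f w \<in> W"
  shows "a \<in> W"
proof -
  have reach: "(\<forall>j<m. (f ^^ j) s \<noteq> a) \<longrightarrow> (f ^^ m) s \<in> W" for m
  proof (induction m)
    case (Suc m)
    have "(f ^^ m) s \<in> orbit f s" unfolding orbit_iff by blast
    then show ?case using Suc assms(3) by auto
  qed (use assms(1) in simp)
  obtain n where "a = (f ^^ n) s" using assms(2) by (auto simp: orbit_iff)
  then have "(f ^^ (LEAST m. (f ^^ m) s = a)) s = a" by (metis (mono_tags) LeastI)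
  moreover have "\<forall>j<(LEAST m. (f ^^ m) s = a). (f ^^ j) s \<noteq> a" using not_less_Least by blast
  ultimately show ?thesis using reach by metis
qed

lemma card_image_le_factor:
  assumes "finite D" "\<And>z z'. z \<in> D \<Longrightarrow> z' \<in> D \<Longrightarrow> f z = f z' \<Longrightarrow> g z = g z'"
  shows "card (g ` D) \<le> card (f ` D)"
proof -
  define h where "h v = g (SOME z. z \<in> D \<and> f z = v)" for v
  have "g z = h (f z)" if "z \<in> D" for z
  proof -
    have "(SOME z'. z' \<in> D \<and> f z' = f z) \<in> D \<and> f (SOME z'. z' \<in> D \<and> f z' = f z) = f z"
      by (rule someI_ex) (use that in blast)
    then show ?thesis unfolding h_def using assms(2) that by metis
  qed
  then have "g ` D = h ` f ` D" unfolding image_image by (rule image_cong[OF refl])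
  then show ?thesis using card_image_le assms(1) by (metis finite_imageI)
qed

lemma card_image_le_card_orbits:
  assumes "finite_perm f S" and "\<And>w. w \<in> S \<Longrightarrow> g (f w) = g w"
  shows "card (g ` S) \<le> card (orbits f S)"
  unfolding orbits_def
proof (rule card_image_le_factor)
  show "finite S" using assms(1) by (simp add: finite_perm_def)
  have sub: "f ` S \<subseteq> S" using assms(1) by (simp add: finite_perm_def)
  have inv: "g ((f ^^ n) z) = g z" if "z \<in> S" for z n
    using that by (induction n) (use assms(2) funpow_mem[OF sub] in auto)
  fix z z' assume "z \<in> S" "z' \<in> S" "orbit f z = orbit f z'"
  then have "z' \<in> orbit f z" using self_in_orbit[of z' f] by simp
  then obtain n where "z' = (f ^^ n) z" by (auto simp: orbit_iff)
  then show "g z = g z'" using inv \<open>z \<in> S\<close> by simp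
qed

lemma card_orbits_involution:
  assumes "finite D" "\<And>z. z \<in> D \<Longrightarrow> f z \<in> D \<and> f (f z) = z \<and> f z \<noteq> z"
  shows "2 * card (orbits f D) = card D"
proof -
  have orbs: "orbits f D = (\<lambda>z. {z, f z}) ` D"
    unfolding orbits_def using orbit_involution[of f] assms(2) by (intro image_cong) simp_all
  have "2 * card (orbits f D) = card (\<Union> (orbits f D))"
  proof (rule card_partition)
    show "finite (orbits f D)" using assms(1) by (simp add: orbs)
    show "finite (\<Union> (orbits f D))" using assms(1) by (simp add: orbs)
    show "card c = 2" if "c \<in> orbits f D" for c
      using that assms(2) by (force simp: orbs)
    show "c1 \<inter> c2 = {}" if c: "c1 \<in> orbits f D" "c2 \<in> orbits f D" "c1 \<noteq> c2" for c1 c2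
    proof -
      have pair: "{z, f z} = {w, f w}" if "w \<in> {z, f z}" "f (f z) = z" for z w
        using that by auto
      obtain z1 z2 where z: "z1 \<in> D" "z2 \<in> D" "c1 = {z1, f z1}" "c2 = {z2, f z2}"
        using c(1,2) by (auto simp: orbs)
      show ?thesis
      proof (rule ccontr)
        assume "c1 \<inter> c2 \<noteq> {}"
        then obtain w where "w \<in> c1" "w \<in> c2" by blast
        then have "c1 = {w, f w}" "c2 = {w, f w}" using pair assms(2) z by metis+
        then show False using c(3) by simp
      qed
    qed
  qed
  also have "\<Union> (orbits f D) = D"
    using assms(2) by (auto simp: orbs)
  finally show ?thesis .
qed

definition arc :: "('a \<Rightarrow> 'a) \<Rightarrow> 'a \<Rightarrow> 'a \<Rightarrow> 'a set" where
  "arc f a b = {(f ^^ n) a | n. \<forall>m\<le>n. (f ^^ m) a \<noteq> b}"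

lemma start_in_arc: "a \<noteq> b \<Longrightarrow> a \<in> arc f a b"
  unfolding arc_def by (intro CollectI exI[of _ 0]) simp

lemma end_notin_arc: "b \<notin> arc f a b"
  unfolding arc_def by auto

lemma apply_in_arc:
  assumes "d \<in> arc f a b" "f d \<noteq> b"
  shows "f d \<in> arc f a b"
proof -
  obtain n where n: "d = (f ^^ n) a" "\<forall>m\<le>n. (f ^^ m) a \<noteq> b" using assms(1) by (auto simp: arc_def)
  then have "f d = (f ^^ Suc n) a" by simp
  moreover have "\<forall>m\<le>Suc n. (f ^^ m) a \<noteq> b" using n(2) assms(2) calculation le_Suc_eq by metis
  ultimately show ?thesis unfolding arc_def by blast
qed

lemma apply_neq_start_if_in_arc:
  assumes "b \<in> orbit f a" "d \<in> arc f a b"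
  shows "f d \<noteq> a"
proof
  assume "f d = a"
  obtain M where M: "b = (f ^^ M) a" using assms(1) by (auto simp: orbit_iff)
  obtain n where n: "d = (f ^^ n) a" "\<forall>m\<le>n. (f ^^ m) a \<noteq> b" using assms(2) by (auto simp: arc_def)
  have "(f ^^ Suc n) a = a" using n(1) \<open>f d = a\<close> by simp
  then have "b = (f ^^ (M mod Suc n)) a" using M funpow_mod_eq by metis
  moreover have "M mod Suc n \<le> n" using mod_less_divisor[of "Suc n" M] by simp
  ultimately show False using n(2) by blast
qed

lemma in_arc_if_apply:
  assumes f: "finite_perm f D" and a: "a \<in> D" and d: "d \<in> D" and b: "b \<in> orbit f a" "b \<noteq> a"
    and fd: "f d \<noteq> a" "f d = b \<or> f d \<in> arc f a b"
  shows "d \<in> arc f a b"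
proof -
  have sub: "f ` D \<subseteq> D" and inj: "inj_on f D" using f by (auto simp: finite_perm_def)
  obtain n where n: "f d = (f ^^ n) a" "\<forall>m<n. (f ^^ m) a \<noteq> b"
  proof (cases "f d = b")
    case True
    obtain M where "b = (f ^^ M) a" using b(1) by (auto simp: orbit_iff)
    then have "(f ^^ (LEAST N. (f ^^ N) a = b)) a = b" by (metis (mono_tags) LeastI)
    moreover have "\<forall>m<(LEAST N. (f ^^ N) a = b). (f ^^ m) a \<noteq> b" using not_less_Least by blast
    ultimately show ?thesis using that True by metis
  next
    case False
    then show ?thesis using that fd(2) by (auto simp: arc_def)
  qed
  obtain k where k: "n = Suc k" using n(1) fd(1) by (cases n) auto
  have "d = (f ^^ k) a" using inj_onD[OF inj _ d funpow_mem[OF sub a]] n(1) k by simp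
  moreover have "\<forall>m\<le>k. (f ^^ m) a \<noteq> b" using n(2) k by simp
  ultimately show ?thesis unfolding arc_def by blast
qed

lemma mem_arc_iff_apply:
  assumes "finite_perm f D" "a \<in> D" "d \<in> D" "b \<in> orbit f a" "b \<noteq> a"
  shows "d \<in> arc f a b \<longleftrightarrow> f d \<noteq> a \<and> (f d = b \<or> f d \<in> arc f a b)"
proof
  assume "d \<in> arc f a b"
  then show "f d \<noteq> a \<and> (f d = b \<or> f d \<in> arc f a b)"
    using apply_in_arc apply_neq_start_if_in_arc[OF assms(4)] by metis
qed (use in_arc_if_apply[OF assms] in blast)

lemma orbit_comp_transpose_other:
  assumes "x \<notin> orbit \<pi> z" "y \<notin> orbit \<pi> z"
  shows "orbit (\<pi> \<circ> transpose x y) z = orbit \<pi> z"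
proof (rule orbit_cong[where S = "orbit \<pi> z"])
  fix w assume w: "w \<in> orbit \<pi> z"
  then have "w \<noteq> x" "w \<noteq> y" using assms by auto
  then show "(\<pi> \<circ> transpose x y) w = \<pi> w" by simp
  then show "(\<pi> \<circ> transpose x y) w \<in> orbit \<pi> z" using orbit_step[OF w] by simp
qed (rule self_in_orbit)

text \<open>\<open>\<pi> \<circ> transpose x y\<close> sends \<open>x\<close> to \<open>\<pi> y\<close> and from there follows the \<open>\<pi>\<close>-orbit of \<open>y\<close>,
  which avoids \<open>x\<close>, all the way round to \<open>y\<close>.\<close>

lemma orbit_comp_transpose_reach:
  assumes \<pi>: "finite_perm \<pi> D" and "y \<in> D" "x \<notin> orbit \<pi> y"
    and x: "x \<in> orbit (\<pi> \<circ> transpose x y) z"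
  shows "y \<in> orbit (\<pi> \<circ> transpose x y) z"
proof (rule orbit_reach[where s = "\<pi> y" and f = \<pi>])
  let ?W = "orbit (\<pi> \<circ> transpose x y) z"
  show "\<pi> y \<in> ?W" using orbit_step[OF x] by simp
  show "y \<in> orbit \<pi> (\<pi> y)" using self_in_orbit_apply[OF \<pi> \<open>y \<in> D\<close>] .
  fix w assume w: "w \<in> ?W" "w \<in> orbit \<pi> (\<pi> y)" "w \<noteq> y"
  have "w \<in> orbit \<pi> y" using orbit_subset_orbit[OF apply_in_orbit[of \<pi> y]] w(2) by (rule subsetD)
  then have "w \<noteq> x" using assms(3) by auto
  then show "\<pi> w \<in> ?W" using orbit_step[OF w(1)] w(3) by simp
qed

lemma orbit_comp_transpose_merge:
  assumes \<pi>: "finite_perm \<pi> D" and x: "x \<in> D" and y: "y \<in> D" and xy: "y \<notin> orbit \<pi> x"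
    and z: "z \<in> orbit \<pi> x \<union> orbit \<pi> y"
  shows "orbit (\<pi> \<circ> transpose x y) z = orbit \<pi> x \<union> orbit \<pi> y"
proof -
  let ?\<pi>' = "\<pi> \<circ> transpose x y" and ?U = "orbit \<pi> x \<union> orbit \<pi> y"
  let ?W = "orbit ?\<pi>' z"
  have yx: "x \<notin> orbit \<pi> y" using orbit_sym[OF \<pi> y] xy by blast
  have "?W \<subseteq> ?U"
  proof (rule orbit_subset[OF z])
    fix w assume "w \<in> ?U"
    then have "transpose x y w \<in> ?U" using self_in_orbit[of x \<pi>] self_in_orbit[of y \<pi>]
      by (cases "w = x \<or> w = y") auto
    then show "?\<pi>' w \<in> ?U" using orbit_step[of _ \<pi> x] orbit_step[of _ \<pi> y] by auto
  qed
  moreover have "?U \<subseteq> ?W"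
  proof -
    have "x \<in> ?W \<or> y \<in> ?W"
    proof (rule ccontr)
      assume "\<not> (x \<in> ?W \<or> y \<in> ?W)"
      then have "orbit \<pi> z \<subseteq> ?W"
        using orbit_step[of _ ?\<pi>' z] by (intro orbit_subset[OF self_in_orbit]) (metis comp_apply transpose_apply_other)
      moreover have "x \<in> orbit \<pi> z \<or> y \<in> orbit \<pi> z"
        using z orbit_eq[OF \<pi> x, of z] orbit_eq[OF \<pi> y, of z] self_in_orbit[of _ \<pi>] by auto
      ultimately show False using \<open>\<not> (x \<in> ?W \<or> y \<in> ?W)\<close> by blast
    qed
    then have "x \<in> ?W" "y \<in> ?W"
      using orbit_comp_transpose_reach[OF \<pi> y yx, of z]
        orbit_comp_transpose_reach[OF \<pi> x xy, of z] transpose_commute[of x y] by auto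
    then have "\<pi> w \<in> ?W" if "w \<in> ?W" for w
      using orbit_step[OF that] orbit_step[of x ?\<pi>' z] orbit_step[of y ?\<pi>' z]
      by (cases "w = x \<or> w = y") auto
    then show ?thesis using orbit_subset \<open>x \<in> ?W\<close> \<open>y \<in> ?W\<close> by (metis Un_least)
  qed
  ultimately show ?thesis by blast
qed

lemma orbits_outside:
  assumes \<pi>: "finite_perm \<pi> D" and x: "x \<in> D" and y: "y \<in> D"
  shows "orbit \<pi> ` (D - (orbit \<pi> x \<union> orbit \<pi> y)) = orbits \<pi> D - {orbit \<pi> x, orbit \<pi> y}"
proof
  show "orbit \<pi> ` (D - (orbit \<pi> x \<union> orbit \<pi> y)) \<subseteq> orbits \<pi> D - {orbit \<pi> x, orbit \<pi> y}"
  proof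
    fix Q assume "Q \<in> orbit \<pi> ` (D - (orbit \<pi> x \<union> orbit \<pi> y))"
    then obtain z where z: "z \<in> D" "z \<notin> orbit \<pi> x" "z \<notin> orbit \<pi> y" "Q = orbit \<pi> z" by blast
    then have "x \<notin> Q" "y \<notin> Q" using orbit_sym[OF \<pi> z(1)] by auto
    then have "Q \<noteq> orbit \<pi> x" "Q \<noteq> orbit \<pi> y" using self_in_orbit[of _ \<pi>] by auto
    then show "Q \<in> orbits \<pi> D - {orbit \<pi> x, orbit \<pi> y}" using z by (auto simp: orbits_def)
  qed
  show "orbits \<pi> D - {orbit \<pi> x, orbit \<pi> y} \<subseteq> orbit \<pi> ` (D - (orbit \<pi> x \<union> orbit \<pi> y))"
  proof
    fix Q assume "Q \<in> orbits \<pi> D - {orbit \<pi> x, orbit \<pi> y}"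
    then obtain z where z: "z \<in> D" "Q = orbit \<pi> z" "Q \<noteq> orbit \<pi> x" "Q \<noteq> orbit \<pi> y"
      by (auto simp: orbits_def)
    then have "z \<notin> orbit \<pi> x" "z \<notin> orbit \<pi> y" using orbit_eq[OF \<pi> x, of z] orbit_eq[OF \<pi> y, of z] by auto
    then show "Q \<in> orbit \<pi> ` (D - (orbit \<pi> x \<union> orbit \<pi> y))" using z by blast
  qed
qed

lemma orbits_comp_transpose_merge:
  assumes \<pi>: "finite_perm \<pi> D" and x: "x \<in> D" and y: "y \<in> D" and xy: "y \<notin> orbit \<pi> x"
  shows "orbits (\<pi> \<circ> transpose x y) D
    = insert (orbit \<pi> x \<union> orbit \<pi> y) (orbits \<pi> D - {orbit \<pi> x, orbit \<pi> y})"
proof -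
  let ?U = "orbit \<pi> x \<union> orbit \<pi> y"
  let ?merged = "\<lambda>z. if z \<in> ?U then ?U else orbit \<pi> z"
  have "orbit (\<pi> \<circ> transpose x y) z = ?merged z" if "z \<in> D" for z
  proof (cases "z \<in> ?U")
    case False
    then have "x \<notin> orbit \<pi> z" "y \<notin> orbit \<pi> z" using orbit_sym[OF \<pi> that] by auto
    then show ?thesis using orbit_comp_transpose_other False by simp
  qed (use orbit_comp_transpose_merge[OF \<pi> x y xy] in simp)
  then have "orbits (\<pi> \<circ> transpose x y) D = ?merged ` D"
    unfolding orbits_def by (rule image_cong[OF refl])
  also have "\<dots> = insert ?U (orbit \<pi> ` (D - ?U))"
  proof
    show "?merged ` D \<subseteq> insert ?U (orbit \<pi> ` (D - ?U))" by auto
    have "?U \<in> ?merged ` D" using x self_in_orbit[of x \<pi>] by (intro image_eqI[of _ _ x]) auto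
    moreover have "orbit \<pi> ` (D - ?U) \<subseteq> ?merged ` D" by auto
    ultimately show "insert ?U (orbit \<pi> ` (D - ?U)) \<subseteq> ?merged ` D" by blast
  qed
  finally show ?thesis using orbits_outside[OF \<pi> x y] by simp
qed

lemma card_orbits_comp_transpose_merge:
  assumes \<pi>: "finite_perm \<pi> D" and x: "x \<in> D" and y: "y \<in> D" and xy: "y \<notin> orbit \<pi> x"
  shows "card (orbits (\<pi> \<circ> transpose x y) D) + 1 = card (orbits \<pi> D)"
proof -
  let ?Ox = "orbit \<pi> x" and ?Oy = "orbit \<pi> y"
  have fin: "finite (orbits \<pi> D)" using \<pi> by (simp add: finite_perm_def orbits_def)
  have "?Ox \<union> ?Oy \<notin> orbits \<pi> D"
  proof
    assume "?Ox \<union> ?Oy \<in> orbits \<pi> D"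
    then obtain z where "z \<in> D" "?Ox \<union> ?Oy = orbit \<pi> z" by (auto simp: orbits_def)
    then have "?Ox = orbit \<pi> z" "y \<in> orbit \<pi> z"
      using orbit_eq_iff[OF \<pi> \<open>z \<in> D\<close> x] self_in_orbit[of x \<pi>] self_in_orbit[of y \<pi>] by auto
    then show False using xy by simp
  qed
  moreover have "card {?Ox, ?Oy} = 2" using xy self_in_orbit[of y \<pi>] by (metis card_2_iff)
  moreover have "{?Ox, ?Oy} \<subseteq> orbits \<pi> D" using x y by (auto simp: orbits_def)
  moreover note card_mono[OF fin this]
  ultimately show ?thesis
    using fin orbits_comp_transpose_merge[OF \<pi> x y xy] by (simp add: card_Diff_subset)
qed

lemma card_orbits_comp_transpose_le:
  assumes \<pi>: "finite_perm \<pi> D" and x: "x \<in> D" and y: "y \<in> D"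
  shows "card (orbits (\<pi> \<circ> transpose x y) D) \<le> card (orbits \<pi> D) + 1"
proof -
  let ?\<pi>' = "\<pi> \<circ> transpose x y"
  have perm': "finite_perm ?\<pi>' D" by (rule finite_perm_comp_transpose[OF \<pi> x y])
  have undo: "?\<pi>' \<circ> transpose x y = \<pi>" by (simp add: comp_assoc)
  have fin: "finite (orbits \<pi> D)" using \<pi> by (simp add: finite_perm_def orbits_def)
  have "orbits ?\<pi>' D \<subseteq> (orbits \<pi> D - {orbit \<pi> x}) \<union> {orbit ?\<pi>' x, orbit ?\<pi>' y}"
  proof
    fix Q assume "Q \<in> orbits ?\<pi>' D"
    then obtain z where z: "z \<in> D" "Q = orbit ?\<pi>' z" by (auto simp: orbits_def)
    show "Q \<in> (orbits \<pi> D - {orbit \<pi> x}) \<union> {orbit ?\<pi>' x, orbit ?\<pi>' y}"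
    proof (cases "x \<in> Q \<or> y \<in> Q")
      case True
      then show ?thesis using z orbit_eq_if_meet[OF perm' z(1) x] orbit_eq_if_meet[OF perm' z(1) y]
        self_in_orbit[of x ?\<pi>'] self_in_orbit[of y ?\<pi>'] by blast
    next
      case False
      then have "Q = orbit \<pi> z" using orbit_comp_transpose_other[of x ?\<pi>' z y] z(2) undo by simp
      then show ?thesis using False z(1) self_in_orbit[of x \<pi>] by (auto simp: orbits_def)
    qed
  qed
  then have "card (orbits ?\<pi>' D) \<le> card (orbits \<pi> D - {orbit \<pi> x} \<union> {orbit ?\<pi>' x, orbit ?\<pi>' y})"
    using fin by (intro card_mono) auto
  also have "\<dots> \<le> card (orbits \<pi> D - {orbit \<pi> x}) + card {orbit ?\<pi>' x, orbit ?\<pi>' y}"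
    by (rule card_Un_le)
  also have "\<dots> \<le> card (orbits \<pi> D - {orbit \<pi> x}) + 2"
    by (simp add: card_insert_le_m1)
  finally have "card (orbits ?\<pi>' D) \<le> card (orbits \<pi> D - {orbit \<pi> x}) + 2" .
  moreover have "Suc (card (orbits \<pi> D - {orbit \<pi> x})) = card (orbits \<pi> D)"
    using x fin by (intro card_Suc_Diff1) (auto simp: orbits_def)
  ultimately show ?thesis by linarith
qed

section \<open>Connected components\<close>

definition num_components :: "('a \<Rightarrow> 'a \<Rightarrow> bool) \<Rightarrow> 'a set \<Rightarrow> nat" where
  "num_components R D = card ((\<lambda>z. {w. equivclp R z w}) ` D)"

lemma component_eq_iff: "{w. equivclp R z w} = {w. equivclp R z' w} \<longleftrightarrow> equivclp R z z'"
proof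
  assume "{w. equivclp R z w} = {w. equivclp R z' w}"
  then show "equivclp R z z'" by (metis equivclp_refl mem_Collect_eq)
next
  assume "equivclp R z z'"
  then show "{w. equivclp R z w} = {w. equivclp R z' w}"
    by (auto intro: equivclp_trans equivclp_sym)
qed

lemma equivclp_mono_rel:
  assumes "\<And>a b. R a b \<Longrightarrow> equivclp S a b" "equivclp R a b"
  shows "equivclp S a b"
  using assms(2)
proof (induction rule: equivclp_induct)
  case (step b c)
  then have "equivclp S b c" using assms(1) equivclp_sym by metis
  then show ?case using step.IH by (rule equivclp_trans[rotated])
qed simp

lemma num_components_mono:
  assumes "finite D" "\<And>a b. R a b \<Longrightarrow> equivclp S a b"
  shows "num_components S D \<le> num_components R D"
  unfolding num_components_def
  by (rule card_image_le_factor[OF assms(1)]) (simp add: component_eq_iff equivclp_mono_rel[OF assms(2)])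

lemma equivclp_insert_edge:
  assumes "equivclp (\<lambda>a b. R a b \<or> a = x \<and> b = y) a b"
  shows "equivclp R a b \<or>
    (equivclp R a x \<or> equivclp R a y) \<and> (equivclp R x b \<or> equivclp R y b)"
  using assms
proof (induction rule: equivclp_induct)
  case (step b c)
  show ?case
  proof (cases "R b c \<or> R c b")
    case True
    then have "equivclp R b c" by blast
    then show ?thesis using step.IH by (metis equivclp_trans)
  next
    case False
    then have "b = x \<and> c = y \<or> b = y \<and> c = x" using step.hyps(2) by auto
    then show ?thesis using step.IH by (metis equivclp_refl)
  qed
qed simp

lemma equivclp_insert_edge_away:
  assumes "\<not> equivclp (\<lambda>a b. R a b \<or> a = x \<and> b = y) x a"
    and "equivclp (\<lambda>a b. R a b \<or> a = x \<and> b = y) a b"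
  shows "equivclp R a b"
proof -
  let ?R' = "\<lambda>a b. R a b \<or> a = x \<and> b = y"
  have R_R': "equivclp ?R' a b" if "equivclp R a b" for a b
    by (rule equivclp_mono_rel[OF _ that]) (simp add: r_into_equivclp)
  have "\<not> equivclp ?R' a x" using assms(1) equivclp_sym[of ?R' a x] by blast
  moreover have "equivclp ?R' a x" if "equivclp R a y"
    using equivclp_trans[OF R_R'[OF that] converse_r_into_equivclp[of ?R' x y]] by simp
  ultimately have "\<not> equivclp R a x \<and> \<not> equivclp R a y" using R_R'[of a x] by blast
  then show ?thesis using equivclp_insert_edge[OF assms(2)] by blast
qed

lemma num_components_insert_edge:
  assumes fin: "finite D" and x: "x \<in> D"
  shows "num_components R D \<le> num_components (\<lambda>a b. R a b \<or> a = x \<and> b = y) D + 1"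
proof -
  let ?R' = "\<lambda>a b. R a b \<or> a = x \<and> b = y"
  let ?K = "\<lambda>z. {w. equivclp R z w}" and ?K' = "\<lambda>z. {w. equivclp ?R' z w}"
  let ?A = "D - ?K' x"
  have "?K z \<in> {?K x, ?K y}" if "z \<in> D - ?A" for z
    using that equivclp_insert_edge[of R x y x z] component_eq_iff[of R x z] component_eq_iff[of R y z]
    by auto
  then have "?K ` D \<subseteq> ?K ` ?A \<union> {?K x, ?K y}" by blast
  then have "num_components R D \<le> card (?K ` ?A \<union> {?K x, ?K y})"
    unfolding num_components_def using fin by (intro card_mono) auto
  also have "\<dots> \<le> card (?K ` ?A) + card {?K x, ?K y}" by (rule card_Un_le)
  also have "\<dots> \<le> card (?K ` ?A) + 2" by (simp add: card_insert_le_m1)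
  finally have "num_components R D \<le> card (?K ` ?A) + 2" .
  moreover have "card (?K ` ?A) \<le> card (?K' ` ?A)"
    using fin equivclp_insert_edge_away by (intro card_image_le_factor) (auto simp: component_eq_iff)
  moreover have "card (?K' ` ?A) + 1 = num_components ?R' D"
  proof -
    have "?K' z = ?K' x" if "z \<in> D - ?A" for z
      using that component_eq_iff[of ?R' x z] by auto
    then have "?K' ` D = insert (?K' x) (?K' ` ?A)" using x by blast
    moreover have "?K' x \<notin> ?K' ` ?A" using component_eq_iff[of ?R' x] by auto
    ultimately show ?thesis unfolding num_components_def using fin by simp
  qed
  ultimately show ?thesis by linarith
qed

section \<open>Euler's inequality for hypermaps\<close>

definition schreier_rel :: "('a \<Rightarrow> 'a) \<Rightarrow> ('a \<Rightarrow> 'a) \<Rightarrow> 'a set \<Rightarrow> 'a \<Rightarrow> 'a \<Rightarrow> bool" where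
  "schreier_rel \<alpha> \<beta> D a b \<longleftrightarrow> a \<in> D \<and> (b = \<alpha> a \<or> b = \<beta> a)"

lemma equivclp_schreier_rel_orbit_comp:
  assumes "\<alpha> ` D \<subseteq> D" "\<beta> ` D \<subseteq> D" "z \<in> D" "w \<in> orbit (\<alpha> \<circ> \<beta>) z"
  shows "equivclp (schreier_rel \<alpha> \<beta> D) z w"
proof -
  let ?R = "schreier_rel \<alpha> \<beta> D"
  have step: "equivclp ?R u (\<alpha> (\<beta> u)) \<and> \<alpha> (\<beta> u) \<in> D" if "u \<in> D" for u
  proof -
    have "\<beta> u \<in> D" using that assms(2) by auto
    then have "equivclp ?R u (\<beta> u)" "equivclp ?R (\<beta> u) (\<alpha> (\<beta> u))" "\<alpha> (\<beta> u) \<in> D"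
      using that assms(1) by (auto intro!: r_into_equivclp simp: schreier_rel_def)
    then show ?thesis using equivclp_trans by metis
  qed
  obtain n where w: "w = ((\<alpha> \<circ> \<beta>) ^^ n) z" using assms(4) by (auto simp: orbit_iff)
  have "equivclp ?R z (((\<alpha> \<circ> \<beta>) ^^ n) z) \<and> ((\<alpha> \<circ> \<beta>) ^^ n) z \<in> D" for n
  proof (induction n)
    case (Suc n)
    then show ?case using step[of "((\<alpha> \<circ> \<beta>) ^^ n) z"] equivclp_trans by (metis comp_apply funpow.simps(2))
  qed (use assms(3) in simp)
  then show ?thesis using w by simp
qed

lemma card_orbits_le_num_components:
  assumes \<alpha>: "finite_perm \<alpha> D" and R: "\<And>a b. R a b \<Longrightarrow> a \<in> D \<and> b \<in> orbit \<alpha> a"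
  shows "card (orbits \<alpha> D) \<le> num_components R D"
proof -
  have "w \<in> orbit \<alpha> z" if "equivclp R z w" for z w
    using that
  proof (induction rule: equivclp_induct)
    case (step b c)
    from step.hyps(2) have "c \<in> orbit \<alpha> b"
    proof
      assume "R c b"
      then show "c \<in> orbit \<alpha> b" using R orbit_sym[OF \<alpha>] by blast
    qed (use R in blast)
    then show ?case using orbit_subset_orbit[OF step.IH] by (rule subsetD[rotated])
  qed (rule self_in_orbit)
  then have "orbit \<alpha> z = orbit \<alpha> z'" if "z \<in> D" "equivclp R z z'" for z z'
    using orbit_eq[OF \<alpha> that(1)] that(2) by metis
  then show ?thesis
    unfolding orbits_def num_components_def using \<alpha>
    by (intro card_image_le_factor) (auto simp: finite_perm_def component_eq_iff)
qed

lemma hypermap_euler_ineq_id: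
  assumes \<alpha>: "finite_perm \<alpha> D" and fixed: "\<And>z. z \<in> D \<Longrightarrow> \<beta> z = z"
  shows "card (orbits \<alpha> D) + card (orbits \<beta> D) + card (orbits (\<alpha> \<circ> \<beta>) D)
    \<le> card D + 2 * num_components (schreier_rel \<alpha> \<beta> D) D"
proof -
  have "orbits \<beta> D = (\<lambda>z. {z}) ` D"
    unfolding orbits_def using orbit_fixpoint[of \<beta>] fixed by (intro image_cong) simp_all
  then have "card (orbits \<beta> D) = card D" by (simp add: card_image)
  moreover have "orbits (\<alpha> \<circ> \<beta>) D = orbits \<alpha> D"
    unfolding orbits_def using \<alpha> fixed
    by (intro image_cong refl orbit_cong[where S = D]) (auto simp: finite_perm_def)
  moreover have "card (orbits \<alpha> D) \<le> num_components (schreier_rel \<alpha> \<beta> D) D"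
    using \<alpha> by (rule card_orbits_le_num_components) (auto simp: schreier_rel_def fixed apply_in_orbit self_in_orbit)
  ultimately show ?thesis by simp
qed

text \<open>Replacing \<open>\<beta>\<close> by \<open>\<beta> \<circ> transpose x (\<beta> x)\<close> cuts the edge from \<open>x\<close> to \<open>\<beta> x\<close> of the
  Schreier graph and reroutes the edge leaving \<open>\<beta> x\<close> so that it starts at \<open>x\<close>.\<close>

lemma schreier_rel_comp_transpose:
  assumes "x \<in> D" "schreier_rel \<alpha> \<beta> D a b"
  shows "equivclp (\<lambda>a b. schreier_rel \<alpha> (\<beta> \<circ> transpose x (\<beta> x)) D a b \<or> a = x \<and> b = \<beta> x) a b"
proof -
  let ?y = "\<beta> x"
  let ?R' = "\<lambda>a b. schreier_rel \<alpha> (\<beta> \<circ> transpose x ?y) D a b \<or> a = x \<and> b = ?y"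
  have a: "a \<in> D" and ab: "b = \<alpha> a \<or> b = \<beta> a" using assms(2) by (auto simp: schreier_rel_def)
  consider "b = \<alpha> a" | "a = x" "b = ?y" | "a = ?y" "a \<noteq> x" "b = \<beta> a" | "a \<noteq> x" "a \<noteq> ?y" "b = \<beta> a"
    using ab by blast
  then show ?thesis
  proof cases
    case 3
    have "equivclp ?R' a x" using 3 by (intro converse_r_into_equivclp) simp
    moreover have "equivclp ?R' x b" using 3 assms(1) by (intro r_into_equivclp) (simp add: schreier_rel_def)
    ultimately show ?thesis by (rule equivclp_trans)
  qed (use a in \<open>auto intro!: r_into_equivclp simp: schreier_rel_def\<close>)
qed

lemma num_components_schreier_rel_comp_transpose:
  assumes "finite D" "x \<in> D"
  shows "num_components (schreier_rel \<alpha> (\<beta> \<circ> transpose x (\<beta> x)) D) D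
    \<le> num_components (schreier_rel \<alpha> \<beta> D) D + 1"
proof -
  let ?R = "schreier_rel \<alpha> (\<beta> \<circ> transpose x (\<beta> x)) D"
  have "num_components ?R D \<le> num_components (\<lambda>a b. ?R a b \<or> a = x \<and> b = \<beta> x) D + 1"
    by (rule num_components_insert_edge[OF assms])
  also have "num_components (\<lambda>a b. ?R a b \<or> a = x \<and> b = \<beta> x) D \<le> num_components (schreier_rel \<alpha> \<beta> D) D"
    by (rule num_components_mono[OF assms(1) schreier_rel_comp_transpose[OF assms(2)]])
  finally show ?thesis by simp
qed

lemma num_components_schreier_rel_comp_transpose_joined:
  assumes "finite D" "x \<in> D"
    and joined: "equivclp (schreier_rel \<alpha> (\<beta> \<circ> transpose x (\<beta> x)) D) x (\<beta> x)"
  shows "num_components (schreier_rel \<alpha> (\<beta> \<circ> transpose x (\<beta> x)) D) D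
    \<le> num_components (schreier_rel \<alpha> \<beta> D) D"
proof (rule num_components_mono[OF assms(1)])
  fix a b assume "schreier_rel \<alpha> \<beta> D a b"
  from schreier_rel_comp_transpose[OF assms(2) this]
  show "equivclp (schreier_rel \<alpha> (\<beta> \<circ> transpose x (\<beta> x)) D) a b"
    by (rule equivclp_mono_rel[rotated]) (use joined in blast)
qed

text \<open>Splitting the transposition \<open>(x, \<beta> x)\<close> off \<open>\<beta>\<close> adds one orbit to \<open>\<beta>\<close>; the orbits of
  \<open>\<alpha> \<circ> \<beta>\<close> either gain one as well, or \<open>x\<close> and \<open>\<beta> x\<close> lie in one orbit of the new \<open>\<alpha> \<circ> \<beta>\<close>, in
  which case the Schreier graph does not fall apart.\<close>

lemma hypermap_defect_comp_transpose:
  assumes \<alpha>: "finite_perm \<alpha> D" and \<beta>: "finite_perm \<beta> D" and x: "x \<in> D" "\<beta> x \<noteq> x"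
  defines "\<beta>' \<equiv> \<beta> \<circ> transpose x (\<beta> x)"
  shows "card (orbits \<beta> D) + card (orbits (\<alpha> \<circ> \<beta>) D) + 2 * num_components (schreier_rel \<alpha> \<beta>' D) D
    \<le> card (orbits \<beta>' D) + card (orbits (\<alpha> \<circ> \<beta>') D) + 2 * num_components (schreier_rel \<alpha> \<beta> D) D"
proof -
  let ?y = "\<beta> x"
  have fin: "finite D" and y: "?y \<in> D" using \<beta> x(1) by (auto simp: finite_perm_def)
  have \<beta>': "finite_perm \<beta>' D" unfolding \<beta>'_def by (rule finite_perm_comp_transpose[OF \<beta> x(1) y])
  have \<beta>_eq: "\<beta> = \<beta>' \<circ> transpose x ?y" by (simp add: \<beta>'_def comp_assoc)
  have "x \<notin> orbit \<beta>' ?y" using orbit_fixpoint[of \<beta>' ?y] x(2) by (simp add: \<beta>'_def)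
  then have "?y \<notin> orbit \<beta>' x" using orbit_sym[OF \<beta>' x(1)] by blast
  then have \<beta>_orbits: "card (orbits \<beta> D) + 1 = card (orbits \<beta>' D)"
    using card_orbits_comp_transpose_merge[OF \<beta>' x(1) y] \<beta>_eq by simp
  have \<alpha>\<beta>': "finite_perm (\<alpha> \<circ> \<beta>') D" by (rule finite_perm_comp[OF \<alpha> \<beta>'])
  have \<alpha>\<beta>_eq: "\<alpha> \<circ> \<beta> = (\<alpha> \<circ> \<beta>') \<circ> transpose x ?y" by (simp add: \<beta>'_def comp_assoc)
  show ?thesis
  proof (cases "?y \<in> orbit (\<alpha> \<circ> \<beta>') x")
    case False
    have "card (orbits (\<alpha> \<circ> \<beta>) D) + 1 = card (orbits (\<alpha> \<circ> \<beta>') D)"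
      using card_orbits_comp_transpose_merge[OF \<alpha>\<beta>' x(1) y False] \<alpha>\<beta>_eq by simp
    moreover have "num_components (schreier_rel \<alpha> \<beta>' D) D \<le> num_components (schreier_rel \<alpha> \<beta> D) D + 1"
      unfolding \<beta>'_def by (rule num_components_schreier_rel_comp_transpose[OF fin x(1)])
    ultimately show ?thesis using \<beta>_orbits by linarith
  next
    case True
    have "card (orbits (\<alpha> \<circ> \<beta>) D) \<le> card (orbits (\<alpha> \<circ> \<beta>') D) + 1"
      using card_orbits_comp_transpose_le[OF \<alpha>\<beta>' x(1) y] \<alpha>\<beta>_eq by simp
    moreover have "equivclp (schreier_rel \<alpha> \<beta>' D) x ?y"
      using \<alpha> \<beta>' True x(1) by (intro equivclp_schreier_rel_orbit_comp) (auto simp: finite_perm_def)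
    then have "num_components (schreier_rel \<alpha> \<beta>' D) D \<le> num_components (schreier_rel \<alpha> \<beta> D) D"
      unfolding \<beta>'_def by (rule num_components_schreier_rel_comp_transpose_joined[OF fin x(1)])
    ultimately show ?thesis using \<beta>_orbits by linarith
  qed
qed

theorem hypermap_euler_ineq:
  assumes "finite_perm \<alpha> D" "finite_perm \<beta> D"
  shows "card (orbits \<alpha> D) + card (orbits \<beta> D) + card (orbits (\<alpha> \<circ> \<beta>) D)
    \<le> card D + 2 * num_components (schreier_rel \<alpha> \<beta> D) D"
  using assms
proof (induction "card {z\<in>D. \<beta> z \<noteq> z}" arbitrary: \<beta> rule: less_induct)
  case less
  note \<alpha> = less.prems(1) and \<beta> = less.prems(2)
  show ?case
  proof (cases "\<forall>z\<in>D. \<beta> z = z")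
    case True
    then show ?thesis using hypermap_euler_ineq_id[OF \<alpha>] by blast
  next
    case False
    then obtain x where x: "x \<in> D" "\<beta> x \<noteq> x" by blast
    let ?y = "\<beta> x"
    let ?\<beta>' = "\<beta> \<circ> transpose x ?y"
    have fin: "finite D" and y: "?y \<in> D" and inj: "inj_on \<beta> D"
      using \<beta> x by (auto simp: finite_perm_def)
    have "\<beta> ?y \<noteq> ?y" using inj_onD[OF inj _ y x(1)] x(2) by auto
    then have "{z\<in>D. ?\<beta>' z \<noteq> z} \<subset> {z\<in>D. \<beta> z \<noteq> z}"
      using x y by (auto simp: transpose_def split: if_splits)
    then have smaller: "card {z\<in>D. ?\<beta>' z \<noteq> z} < card {z\<in>D. \<beta> z \<noteq> z}"
      using fin by (intro psubset_card_mono) auto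
    have "finite_perm ?\<beta>' D" by (rule finite_perm_comp_transpose[OF \<beta> x(1) y])
    note IH = less.hyps[OF smaller \<alpha> this]
    show ?thesis using IH hypermap_defect_comp_transpose[OF \<alpha> \<beta> x] by linarith
  qed
qed

corollary hypermap_euler_ineq_connected:
  assumes "finite_perm \<alpha> D" "finite_perm \<beta> D" "z0 \<in> D"
    and "\<And>z. z \<in> D \<Longrightarrow> equivclp (schreier_rel \<alpha> \<beta> D) z0 z"
  shows "card (orbits \<alpha> D) + card (orbits \<beta> D) + card (orbits (\<alpha> \<circ> \<beta>) D) \<le> card D + 2"
proof -
  let ?K = "\<lambda>z. {w. equivclp (schreier_rel \<alpha> \<beta> D) z w}"
  have "?K ` D = {?K z0}"
    using assms(3,4) component_eq_iff[of "schreier_rel \<alpha> \<beta> D" z0] by blast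
  then have "num_components (schreier_rel \<alpha> \<beta> D) D = 1" by (simp add: num_components_def)
  then show ?thesis using hypermap_euler_ineq[OF assms(1,2)] by simp
qed

section \<open>Darts of simple graphs and of cycles\<close>

lemma finite_darts: "simple_graph V E \<Longrightarrow> finite (darts E)"
  by (rule finite_subset[of _ "V \<times> V"]) (auto simp: simple_graph_def darts_def)

lemma rev_dart_in_darts: "simple_graph V E \<Longrightarrow> d \<in> darts E \<Longrightarrow> rev_dart d \<in> darts E"
  by (auto simp: simple_graph_def darts_def rev_dart_def)

lemma rev_dart_neq: "simple_graph V E \<Longrightarrow> d \<in> darts E \<Longrightarrow> rev_dart d \<noteq> d"
  by (auto simp: simple_graph_def darts_def rev_dart_def)

lemma rev_rev_dart [simp]: "rev_dart (rev_dart d) = d"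
  by (simp add: rev_dart_def)

lemma card_le_twice_card_image:
  assumes "finite A" "\<And>y. y \<in> f ` A \<Longrightarrow> card {x \<in> A. f x = y} \<le> 2"
  shows "card A \<le> 2 * card (f ` A)"
proof -
  have "A = (\<Union>y\<in>f ` A. {x \<in> A. f x = y})" by blast
  also have "card \<dots> \<le> (\<Sum>y\<in>f ` A. card {x \<in> A. f x = y})"
    using assms(1) by (intro card_UN_le) simp
  also have "\<dots> \<le> (\<Sum>y\<in>f ` A. 2)" using assms(2) by (rule sum_mono)
  finally show ?thesis by simp
qed

lemma card_darts_le:
  assumes "simple_graph V E"
  shows "card (darts E) \<le> 2 * card (edges E)"
proof -
  let ?ends = "\<lambda>d. {fst d, snd d}"
  have edges: "edges E = ?ends ` darts E"
    unfolding edges_def darts_def by (auto simp: image_iff) blast+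
  have "card {d \<in> darts E. ?ends d = e} \<le> 2" if "e \<in> edges E" for e
  proof -
    obtain u v where "e = {u, v}" using \<open>e \<in> edges E\<close> by (auto simp: edges_def)
    then have "{d \<in> darts E. ?ends d = e} \<subseteq> {(u, v), (v, u)}" by (auto simp: doubleton_eq_iff)
    then have "card {d \<in> darts E. ?ends d = e} \<le> card {(u, v), (v, u)}" by (intro card_mono) auto
    also have "\<dots> \<le> 2" by (cases "u = v") simp_all
    finally show ?thesis .
  qed
  then show ?thesis unfolding edges
    using card_le_twice_card_image[OF finite_darts[OF assms]] by blast
qed

lemma connected_graph_dart_from:
  assumes "connected_graph V E" "u \<in> V" "v \<in> V" "u \<noteq> v"
  shows "\<exists>w. E u w"
proof -
  have "(\<lambda>x y. E x y \<and> x \<in> V \<and> y \<in> V)\<^sup>*\<^sup>* u v"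
    using assms by (auto simp: connected_graph_def connected_set_def)
  then show ?thesis using assms(4) by (metis (no_types, lifting) converse_rtranclpE)
qed

definition cyc_step :: "'v list \<Rightarrow> bool \<Rightarrow> nat \<Rightarrow> nat" where
  "cyc_step C b i = (if b then (i + 1) mod length C else (i + length C - 1) mod length C)"

definition cyc_dart :: "'v list \<Rightarrow> bool \<Rightarrow> nat \<Rightarrow> 'v \<times> 'v" where
  "cyc_dart C b i = (C ! i, C ! cyc_step C b i)"

lemma cyc_step_eq:
  assumes "i < length C"
  shows "cyc_step C b i = (if b then if i + 1 = length C then 0 else i + 1
    else if i = 0 then length C - 1 else i - 1)"
proof -
  have "(i + length C - 1) mod length C = (if i = 0 then length C - 1 else i - 1)"
  proof (cases "i = 0")
    case False
    then have "i + length C - 1 = (i - 1) + length C" by simp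
    then have "(i + length C - 1) mod length C = (i - 1) mod length C" by (simp only: mod_add_self2)
    then show ?thesis using assms False by simp
  qed (use assms in simp)
  moreover have "(i + 1) mod length C = (if i + 1 = length C then 0 else i + 1)"
    using assms by simp
  ultimately show ?thesis by (simp add: cyc_step_def)
qed

lemma cyc_step_lt: "i < length C \<Longrightarrow> cyc_step C b i < length C"
  by (auto simp: cyc_step_eq)

lemma cyc_step_cyc_step: "i < length C \<Longrightarrow> cyc_step C (\<not> b) (cyc_step C b i) = i"
  using cyc_step_eq[of "cyc_step C b i" C "\<not> b"] cyc_step_lt[of i C b]
  by (cases b) (auto simp: cyc_step_eq)

lemma cyc_step_forward_neq_backward:
  "i < length C \<Longrightarrow> 3 \<le> length C \<Longrightarrow> cyc_step C True i \<noteq> cyc_step C False i"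
  by (auto simp: cyc_step_eq)

text \<open>Stepping backwards is reduced to stepping forwards: if \<open>P\<close> is preserved by backward
  steps, then \<open>\<not> P\<close> is preserved by forward steps.\<close>

lemma cyc_step_induct:
  assumes "i0 < length C" "P i0" "\<And>j. j < length C \<Longrightarrow> P j \<Longrightarrow> P (cyc_step C b j)"
    and "j < length C"
  shows "P j"
proof -
  have forward: "Q j" if "i < length C" "Q i" "\<And>j. j < length C \<Longrightarrow> Q j \<Longrightarrow> Q ((j + 1) mod length C)"
    and "j < length C" for Q i j
  proof -
    have "Q ((i + k) mod length C)" for k
    proof (induction k)
      case (Suc k)
      have "0 < length C" using that(1) by linarith
      then have "(i + k) mod length C < length C" by simp
      then show ?case using that(3)[of "(i + k) mod length C"] Suc by (simp add: mod_Suc_eq)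
    qed (use that(1,2) in simp)
    from this[of "length C - i + j"] show ?thesis using that(1,4) by simp
  qed
  show ?thesis
  proof (cases b)
    case True
    then show ?thesis using forward[of i0 P] assms by (simp add: cyc_step_def)
  next
    case False
    show ?thesis
    proof (rule ccontr)
      assume "\<not> P j"
      have "\<not> P k" if "k < length C" for k
      proof (rule forward[of j "\<lambda>k. \<not> P k", OF assms(4) \<open>\<not> P j\<close> _ that])
        fix k assume "k < length C" "\<not> P k"
        then show "\<not> P ((k + 1) mod length C)"
          using assms(3)[of "cyc_step C True k"] cyc_step_cyc_step[of k C True] cyc_step_lt[of k C True] False
          by (auto simp: cyc_step_def)
      qed
      then show False using assms(1,2) by blast
    qed
  qed
qed

lemma fst_cyc_dart [simp]: "fst (cyc_dart C b i) = C ! i"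
  by (simp add: cyc_dart_def)

lemma rev_cyc_dart:
  "i < length C \<Longrightarrow> rev_dart (cyc_dart C b i) = cyc_dart C (\<not> b) (cyc_step C b i)"
  by (simp add: cyc_dart_def rev_dart_def cyc_step_cyc_step)

lemma cyc_darts_forward: "cyc_darts C = cyc_dart C True ` {..<length C}"
  by (auto simp: cyc_darts_def cyc_dart_def cyc_step_def)

lemma cyc_darts_rev: "cyc_darts (rev C) = cyc_dart C False ` {..<length C}"
proof -
  let ?n = "length C"
  have "(rev C ! i, rev C ! ((i + 1) mod ?n)) = cyc_dart C False (?n - 1 - i)" if "i < ?n" for i
  proof (cases "i + 1 = ?n")
    case True
    have "0 < ?n" using that by linarith
    then show ?thesis using True cyc_step_eq[of 0 C False] by (simp add: rev_nth cyc_dart_def)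
  next
    case False
    then show ?thesis using that by (simp add: rev_nth cyc_dart_def cyc_step_eq Suc_diff_Suc)
  qed
  then have "(\<lambda>i. (rev C ! i, rev C ! ((i + 1) mod ?n))) ` {..<?n}
      = (\<lambda>i. cyc_dart C False (?n - 1 - i)) ` {..<?n}"
    by (intro image_cong) simp_all
  moreover have "cyc_darts (rev C) = (\<lambda>i. (rev C ! i, rev C ! ((i + 1) mod ?n))) ` {..<?n}"
    unfolding cyc_darts_def length_rev by blast
  ultimately have "cyc_darts (rev C) = (\<lambda>i. cyc_dart C False (?n - 1 - i)) ` {..<?n}" by simp
  also have "\<dots> = cyc_dart C False ` ((\<lambda>i. ?n - 1 - i) ` {..<?n})" by (simp add: image_image)
  also have "(\<lambda>i. ?n - 1 - i) ` {..<?n} = {..<?n}"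
  proof
    show "{..<?n} \<subseteq> (\<lambda>i. ?n - 1 - i) ` {..<?n}"
    proof
      fix k assume "k \<in> {..<?n}"
      then show "k \<in> (\<lambda>i. ?n - 1 - i) ` {..<?n}" by (intro image_eqI[of _ _ "?n - 1 - k"]) auto
    qed
  qed auto
  finally show ?thesis .
qed

lemma cyc_dart_in_darts:
  assumes "simple_graph V E" "is_cycle V E C" "i < length C"
  shows "cyc_dart C b i \<in> darts E"
proof -
  have forward: "cyc_dart C True j \<in> darts E" if "j < length C" for j
    using assms(2) that by (simp add: is_cycle_def darts_def cyc_dart_def cyc_step_def)
  show ?thesis
  proof (cases b)
    case False
    have "rev_dart (cyc_dart C True (cyc_step C False i)) = cyc_dart C False i"
      using rev_cyc_dart[of "cyc_step C False i" C True] cyc_step_lt[OF assms(3)] cyc_step_cyc_step[OF assms(3), of False]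
      by simp
    then show ?thesis
      using rev_dart_in_darts[OF assms(1) forward[OF cyc_step_lt[OF assms(3), of False]]] False by simp
  qed (use forward assms(3) in simp)
qed

lemma cyc_dart_eq_iff:
  assumes "distinct C" "3 \<le> length C" "i < length C" "i' < length C"
  shows "cyc_dart C b i = cyc_dart C b' i' \<longleftrightarrow> b = b' \<and> i = i'"
proof
  assume eq: "cyc_dart C b i = cyc_dart C b' i'"
  then have "i = i'" using assms by (simp add: cyc_dart_def nth_eq_iff_index_eq)
  moreover have "cyc_step C b i = cyc_step C b' i"
    using eq assms cyc_step_lt[OF assms(3), of b] cyc_step_lt[OF assms(3), of b'] \<open>i = i'\<close>
    by (simp add: cyc_dart_def nth_eq_iff_index_eq)
  ultimately show "b = b' \<and> i = i'"
    using cyc_step_forward_neq_backward[OF assms(3,2)] by (cases b; cases b') auto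
qed simp

section \<open>Cutting the surface along a peripheral family\<close>

locale peripheral_cut =
  fixes V :: "'v set" and E :: "'v \<Rightarrow> 'v \<Rightarrow> bool" and \<rho> :: "'v \<times> 'v \<Rightarrow> 'v \<times> 'v"
    and Cs :: "'v list set"
  assumes connected: "connected_graph V E" and rotation: "rotation_system V E \<rho>"
    and family: "peripheral_family V E Cs" and nonempty: "Cs \<noteq> {}"
begin

abbreviation D :: "('v \<times> 'v) set" where
  "D \<equiv> darts E"

definition cycle_verts :: "'v set" where
  "cycle_verts = (\<Union>C\<in>Cs. set C)"

definition cycle_darts :: "('v \<times> 'v) set" where
  "cycle_darts = {cyc_dart C b i | C b i. C \<in> Cs \<and> i < length C}"

lemma simple: "simple_graph V E"
  using connected by (simp add: connected_graph_def)

lemma finite_D: "finite D"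
  using finite_darts[OF simple] .

lemma finite_perm_rho: "finite_perm \<rho> D"
  using rotation finite_D by (auto simp: finite_perm_def rotation_system_def bij_betw_def)

lemma rho_in: "d \<in> D \<Longrightarrow> \<rho> d \<in> D"
  using finite_perm_rho by (auto simp: finite_perm_def)

lemma fst_rho: "d \<in> D \<Longrightarrow> fst (\<rho> d) = fst d"
  using rotation by (simp add: rotation_system_def)

lemma rho_orbit: "d \<in> D \<Longrightarrow> d' \<in> D \<Longrightarrow> fst d = fst d' \<Longrightarrow> d' \<in> orbit \<rho> d"
  using rotation unfolding rotation_system_def orbit_iff by metis

lemma finite_perm_face_perm: "finite_perm (face_perm \<rho>) D"
proof -
  have "inj_on rev_dart D" by (rule inj_onI) (metis rev_rev_dart)
  then have "finite_perm rev_dart D"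
    using finite_D rev_dart_in_darts[OF simple] by (auto simp: finite_perm_def)
  then show ?thesis unfolding face_perm_def by (rule finite_perm_comp[OF finite_perm_rho])
qed

lemma cycle: "C \<in> Cs \<Longrightarrow> is_cycle V E C"
  using family by (auto simp: peripheral_family_def peripheral_cycle_def induced_cycle_def)

lemma cycle_length: "C \<in> Cs \<Longrightarrow> 3 \<le> length C"
  using cycle by (simp add: is_cycle_def)

lemma cycle_distinct: "C \<in> Cs \<Longrightarrow> distinct C"
  using cycle by (simp add: is_cycle_def)

lemma cycles_disjoint: "C \<in> Cs \<Longrightarrow> C' \<in> Cs \<Longrightarrow> C \<noteq> C' \<Longrightarrow> set C \<inter> set C' = {}"
  using family by (simp add: peripheral_family_def)

lemma cycles_nonadjacent:
  "C \<in> Cs \<Longrightarrow> C' \<in> Cs \<Longrightarrow> C \<noteq> C' \<Longrightarrow> u \<in> set C \<Longrightarrow> v \<in> set C' \<Longrightarrow> \<not> E u v"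
  using family by (simp add: peripheral_family_def)

lemma cycle_induced:
  "C \<in> Cs \<Longrightarrow> u \<in> set C \<Longrightarrow> v \<in> set C \<Longrightarrow> E u v \<Longrightarrow> (u, v) \<in> cyc_darts C \<or> (v, u) \<in> cyc_darts C"
  using family by (simp add: peripheral_family_def peripheral_cycle_def induced_cycle_def)

lemma outside_connected: "connected_set E (V - cycle_verts)"
  using family by (simp add: peripheral_family_def cycle_verts_def)

lemma cycle_verts_subset: "cycle_verts \<subseteq> V"
  using cycle by (auto simp: cycle_verts_def is_cycle_def)

lemma cycle_dartsE:
  assumes "e \<in> cycle_darts"
  obtains C b i where "C \<in> Cs" "i < length C" "e = cyc_dart C b i"
  using assms by (auto simp: cycle_darts_def)

lemma cyc_dart_in_cycle_darts: "C \<in> Cs \<Longrightarrow> i < length C \<Longrightarrow> cyc_dart C b i \<in> cycle_darts"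
  by (auto simp: cycle_darts_def)

lemma cycle_darts_subset: "cycle_darts \<subseteq> D"
  using cyc_dart_in_darts[OF simple cycle] by (auto elim: cycle_dartsE)

lemma fst_cycle_dart: "e \<in> cycle_darts \<Longrightarrow> fst e \<in> cycle_verts"
  by (erule cycle_dartsE) (metis UN_I cycle_verts_def fst_cyc_dart nth_mem)

lemma rev_cycle_dart: "e \<in> cycle_darts \<Longrightarrow> rev_dart e \<in> cycle_darts"
  by (erule cycle_dartsE) (simp add: rev_cyc_dart cyc_dart_in_cycle_darts cyc_step_lt)

lemma same_cycle:
  assumes "C \<in> Cs" "C' \<in> Cs" "i < length C" "i' < length C'" "C ! i = C' ! i'"
  shows "C = C'"
proof (rule ccontr)
  assume "C \<noteq> C'"
  then have "set C \<inter> set C' = {}" by (rule cycles_disjoint[OF assms(1,2)])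
  then show False using nth_mem[OF assms(3)] nth_mem[OF assms(4)] assms(5) by (metis disjoint_iff)
qed

lemma cyc_dart_eq_iff_family:
  assumes C: "C \<in> Cs" "C' \<in> Cs" "i < length C" "i' < length C'"
  shows "cyc_dart C b i = cyc_dart C' b' i' \<longleftrightarrow> C = C' \<and> b = b' \<and> i = i'"
proof
  assume eq: "cyc_dart C b i = cyc_dart C' b' i'"
  then have "C = C'" using same_cycle[OF C] fst_cyc_dart by metis
  then show "C = C' \<and> b = b' \<and> i = i'"
    using eq cyc_dart_eq_iff[OF cycle_distinct[OF C(1)] cycle_length[OF C(1)] C(3)] C(4) by simp
qed auto

lemma cycle_dart_at:
  assumes C: "C \<in> Cs" and j: "j < length C" and e: "e \<in> cycle_darts" and "fst e = C ! j"
  shows "\<exists>b. e = cyc_dart C b j"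
proof -
  obtain C' b i where C': "C' \<in> Cs" "i < length C'" "e = cyc_dart C' b i"
    using e by (rule cycle_dartsE)
  then have "C' ! i = C ! j" using assms(4) by simp
  moreover from this have "C' = C" using same_cycle[OF C'(1) C C'(2) j] by simp
  ultimately have "i = j" using cycle_distinct[OF C] C'(2) j by (simp add: nth_eq_iff_index_eq)
  then show ?thesis using C' \<open>C' = C\<close> by blast
qed

definition twin :: "'v \<times> 'v \<Rightarrow> 'v \<times> 'v" where
  "twin e = (SOME e'. e' \<in> cycle_darts \<and> fst e' = fst e \<and> e' \<noteq> e)"

lemma twin_cyc_dart:
  assumes C: "C \<in> Cs" "i < length C"
  shows "twin (cyc_dart C b i) = cyc_dart C (\<not> b) i"
  unfolding twin_def
proof (rule some_equality)
  show "cyc_dart C (\<not> b) i \<in> cycle_darts \<and> fst (cyc_dart C (\<not> b) i) = fst (cyc_dart C b i)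
      \<and> cyc_dart C (\<not> b) i \<noteq> cyc_dart C b i"
    using cyc_dart_in_cycle_darts[OF C] cyc_dart_eq_iff_family[OF C(1) C(1) C(2) C(2)] by simp
  fix e assume e: "e \<in> cycle_darts \<and> fst e = fst (cyc_dart C b i) \<and> e \<noteq> cyc_dart C b i"
  then have "\<exists>b'. e = cyc_dart C b' i" using cycle_dart_at[OF C, of e] by simp
  then obtain b' where "e = cyc_dart C b' i" by blast
  then show "e = cyc_dart C (\<not> b) i" using e by (cases b; cases b') simp_all
qed

lemma twin_in_cycle_darts: "e \<in> cycle_darts \<Longrightarrow> twin e \<in> cycle_darts"
  and fst_twin: "e \<in> cycle_darts \<Longrightarrow> fst (twin e) = fst e"
  and twin_neq: "e \<in> cycle_darts \<Longrightarrow> twin e \<noteq> e"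
  and twin_twin: "e \<in> cycle_darts \<Longrightarrow> twin (twin e) = e"
  by (auto elim!: cycle_dartsE simp: twin_cyc_dart cyc_dart_in_cycle_darts cyc_dart_eq_iff_family)

lemma cycle_dart_at_vertex:
  assumes "e \<in> cycle_darts" "e' \<in> cycle_darts" "fst e' = fst e"
  shows "e' = e \<or> e' = twin e"
proof -
  obtain C b i where C: "C \<in> Cs" "i < length C" "e = cyc_dart C b i"
    using assms(1) by (rule cycle_dartsE)
  have "\<exists>b'. e' = cyc_dart C b' i" using cycle_dart_at[OF C(1,2) assms(2)] assms(3) C(3) by simp
  then obtain b' where "e' = cyc_dart C b' i" by blast
  then show ?thesis using C(3) twin_cyc_dart[OF C(1,2), of b] by (cases b; cases b') simp_all
qed

lemma twin_rev_cyc_dart: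
  "C \<in> Cs \<Longrightarrow> i < length C \<Longrightarrow> twin (rev_dart (cyc_dart C b i)) = cyc_dart C b (cyc_step C b i)"
  by (simp add: rev_cyc_dart twin_cyc_dart cyc_step_lt)

lemma rho_cycle_dart:
  assumes e: "e \<in> cycle_darts" and "\<rho> e \<in> cycle_darts"
  shows "\<rho> e = twin e"
proof -
  have eD: "e \<in> D" using e cycle_darts_subset by blast
  have "\<rho> e \<noteq> e"
  proof
    assume "\<rho> e = e"
    then have "orbit \<rho> e = {e}" by (rule orbit_fixpoint)
    moreover have "twin e \<in> orbit \<rho> e"
      using rho_orbit[OF eD subsetD[OF cycle_darts_subset twin_in_cycle_darts[OF e]]] fst_twin[OF e]
      by simp
    ultimately show False using twin_neq[OF e] by simp
  qed
  then show ?thesis using cycle_dart_at_vertex[OF e assms(2)] fst_rho[OF eD] by simp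
qed

lemma noncycle_dart_leaves:
  assumes d: "d \<in> D" "d \<notin> cycle_darts" and "fst d \<in> cycle_verts"
  shows "snd d \<in> V - cycle_verts"
proof -
  have E: "E (fst d) (snd d)" using d(1) by (auto simp: darts_def)
  obtain C where C: "C \<in> Cs" "fst d \<in> set C" using assms(3) by (auto simp: cycle_verts_def)
  have "snd d \<notin> cycle_verts"
  proof
    assume "snd d \<in> cycle_verts"
    then obtain C' where C': "C' \<in> Cs" "snd d \<in> set C'" by (auto simp: cycle_verts_def)
    then have "C' = C" using cycles_nonadjacent[OF C(1) C'(1) _ C(2) C'(2)] E by blast
    then have "d \<in> cyc_darts C \<or> rev_dart d \<in> cyc_darts C"
      using cycle_induced[OF C _ E] C'(2) by (simp add: rev_dart_def)
    moreover have "cyc_darts C \<subseteq> cycle_darts"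
      using C(1) by (auto simp: cyc_darts_forward intro: cyc_dart_in_cycle_darts)
    ultimately show False using d(2) rev_cycle_dart[of "rev_dart d"] by auto
  qed
  moreover have "snd d \<in> V" using E simple by (simp add: simple_graph_def)
  ultimately show ?thesis by simp
qed

lemma card_cycle_darts_le: "card cycle_darts \<le> 2 * card cycle_verts"
proof -
  have fin: "finite cycle_darts" using finite_subset[OF cycle_darts_subset finite_D] .
  have "card {e \<in> cycle_darts. fst e = v} \<le> 2" if v: "v \<in> fst ` cycle_darts" for v
  proof -
    obtain e where e: "e \<in> cycle_darts" "v = fst e" using v by blast
    then have "{e' \<in> cycle_darts. fst e' = v} \<subseteq> {e, twin e}"
      using cycle_dart_at_vertex[OF e(1)] by blast
    then have "card {e' \<in> cycle_darts. fst e' = v} \<le> card {e, twin e}" by (intro card_mono) auto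
    also have "\<dots> \<le> 2" by (cases "twin e = e") simp_all
    finally show ?thesis .
  qed
  then have "card cycle_darts \<le> 2 * card (fst ` cycle_darts)" by (rule card_le_twice_card_image[OF fin])
  also have "card (fst ` cycle_darts) \<le> card cycle_verts"
    using fst_cycle_dart finite_subset[OF cycle_verts_subset] simple
    by (intro card_mono) (auto simp: simple_graph_def)
  finally show ?thesis by simp
qed

text \<open>Every cycle dart gets a second copy, flagged \<open>True\<close>. The cut rotation follows \<open>\<rho>\<close>
  until it meets a cycle dart, enters the flagged copy of it and jumps from there to its twin,
  so each cycle vertex splits into two vertices. The cut reversal pairs each unflagged cycle
  dart with the flagged copy of its reverse; as a result the two sides of each cycle become
  boundaries of new faces.\<close>

definition cut_darts :: "(('v \<times> 'v) \<times> bool) set" where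
  "cut_darts = D \<times> {False} \<union> cycle_darts \<times> {True}"

definition cut_rot :: "('v \<times> 'v) \<times> bool \<Rightarrow> ('v \<times> 'v) \<times> bool" where
  "cut_rot z = (if snd z then (twin (fst z), False) else (\<rho> (fst z), \<rho> (fst z) \<in> cycle_darts))"

definition cut_rev :: "('v \<times> 'v) \<times> bool \<Rightarrow> ('v \<times> 'v) \<times> bool" where
  "cut_rev z = (rev_dart (fst z), if fst z \<in> cycle_darts then \<not> snd z else snd z)"

lemma mem_cut_darts: "(d, t) \<in> cut_darts \<longleftrightarrow> (if t then d \<in> cycle_darts else d \<in> D)"
  by (auto simp: cut_darts_def)

lemma finite_cycle_darts: "finite cycle_darts"
  using finite_subset[OF cycle_darts_subset finite_D] .

lemma finite_cut_darts: "finite cut_darts"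
  using finite_D finite_cycle_darts by (simp add: cut_darts_def)

lemma card_cut_darts: "card cut_darts = card D + card cycle_darts"
  unfolding cut_darts_def using finite_D finite_cycle_darts
  by (subst card_Un_disjoint) (auto simp: card_cartesian_product)

lemma finite_perm_cut_rot: "finite_perm cut_rot cut_darts"
proof -
  have "cut_rot z \<in> cut_darts" if "z \<in> cut_darts" for z
    using that twin_in_cycle_darts cycle_darts_subset rho_in
    by (cases z) (auto simp: cut_rot_def mem_cut_darts split: if_splits)
  moreover have "inj_on cut_rot cut_darts"
  proof (rule inj_onI)
    fix z z' assume z: "z \<in> cut_darts" "z' \<in> cut_darts" and eq: "cut_rot z = cut_rot z'"
    obtain d t d' t' where dt: "z = (d, t)" "z' = (d', t')" by (cases z, cases z')
    consider "t" "t'" | "t \<noteq> t'" | "\<not> t" "\<not> t'" by blast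
    then show "z = z'"
    proof cases
      case 1
      then have "d \<in> cycle_darts" "d' \<in> cycle_darts" "twin d = twin d'"
        using z eq dt by (simp_all add: mem_cut_darts cut_rot_def)
      then have "d = d'" using twin_twin by metis
      then show ?thesis using 1 dt by simp
    next
      case 2
      have no_mix: False if "cut_rot (e, True) = cut_rot (e', False)" "e \<in> cycle_darts" for e e'
        using that twin_in_cycle_darts[OF that(2)] by (simp add: cut_rot_def)
      show ?thesis
      proof (cases t)
        case True
        then show ?thesis using no_mix[of d d'] 2 z eq dt by (simp add: mem_cut_darts)
      next
        case False
        then show ?thesis using no_mix[of d' d] 2 z eq dt by (simp add: mem_cut_darts)
      qed
    next
      case 3
      then have "d \<in> D" "d' \<in> D" "\<rho> d = \<rho> d'" using z eq dt by (auto simp: mem_cut_darts cut_rot_def)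
      then have "d = d'" using finite_perm_rho inj_onD by (metis finite_perm_def)
      then show ?thesis using 3 dt by simp
    qed
  qed
  ultimately show ?thesis using finite_cut_darts by (simp add: finite_perm_def image_subset_iff)
qed

lemma cut_rev_involution:
  assumes "z \<in> cut_darts"
  shows "cut_rev z \<in> cut_darts \<and> cut_rev (cut_rev z) = z \<and> cut_rev z \<noteq> z"
  using assms rev_dart_in_darts[OF simple] rev_dart_neq[OF simple] rev_cycle_dart[of "rev_dart _"]
    rev_cycle_dart cycle_darts_subset
  by (cases z) (auto simp: cut_rev_def mem_cut_darts)

lemma finite_perm_cut_rev: "finite_perm cut_rev cut_darts"
proof -
  have "inj_on cut_rev cut_darts" by (rule inj_onI) (metis cut_rev_involution)
  then show ?thesis using finite_cut_darts cut_rev_involution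
    by (simp add: finite_perm_def image_subset_iff)
qed

lemma card_orbits_cut_rev: "2 * card (orbits cut_rev cut_darts) = card cut_darts"
  using finite_cut_darts cut_rev_involution by (rule card_orbits_involution)

definition base_dart :: "'v \<Rightarrow> 'v \<times> 'v" where
  "base_dart v = (SOME e. e \<in> cycle_darts \<and> fst e = v)"

lemma base_dart:
  assumes "v \<in> cycle_verts"
  shows "base_dart v \<in> cycle_darts \<and> fst (base_dart v) = v"
proof -
  obtain C j where "C \<in> Cs" "j < length C" "v = C ! j"
    using assms by (auto simp: cycle_verts_def in_set_conv_nth)
  then have "cyc_dart C True j \<in> cycle_darts \<and> fst (cyc_dart C True j) = v"
    by (simp add: cyc_dart_in_cycle_darts)
  then show ?thesis unfolding base_dart_def by (rule someI)
qed

text \<open>At a cycle vertex \<open>v\<close> the two halves of the cut rotation are told apart by the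
  \<open>\<rho>\<close>-arc from the base dart of \<open>v\<close> to its twin; flagged copies belong to the opposite half.\<close>

definition rotation_half :: "'v \<Rightarrow> ('v \<times> 'v) set" where
  "rotation_half v = arc \<rho> (base_dart v) (twin (base_dart v))"

definition cut_vertex :: "('v \<times> 'v) \<times> bool \<Rightarrow> 'v \<times> bool" where
  "cut_vertex z = (fst (fst z),
     fst (fst z) \<in> cycle_verts \<and> ((fst z \<in> rotation_half (fst (fst z))) \<noteq> snd z))"

lemma fst_fst_cut_rot: "z \<in> cut_darts \<Longrightarrow> fst (fst (cut_rot z)) = fst (fst z)"
  by (cases z) (auto simp: cut_rot_def mem_cut_darts fst_twin fst_rho split: if_splits)

lemma base_dart_in_rotation_half: "v \<in> cycle_verts \<Longrightarrow> base_dart v \<in> rotation_half v"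
  using base_dart twin_neq start_in_arc unfolding rotation_half_def by metis

lemma twin_base_dart_notin_rotation_half: "twin (base_dart v) \<notin> rotation_half v"
  unfolding rotation_half_def by (rule end_notin_arc)

lemma cycle_dart_at_cycle_vertex:
  "v \<in> cycle_verts \<Longrightarrow> e \<in> cycle_darts \<Longrightarrow> fst e = v \<Longrightarrow> e = base_dart v \<or> e = twin (base_dart v)"
  using cycle_dart_at_vertex base_dart by metis

lemma mem_rotation_half_iff:
  assumes v: "v \<in> cycle_verts" and d: "d \<in> D"
  shows "d \<in> rotation_half v \<longleftrightarrow>
    \<rho> d \<noteq> base_dart v \<and> (\<rho> d = twin (base_dart v) \<or> \<rho> d \<in> rotation_half v)"
proof -
  let ?a = "base_dart v"
  have a: "?a \<in> cycle_darts" "?a \<in> D" using base_dart[OF v] cycle_darts_subset by auto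
  have "twin ?a \<in> D" using subsetD[OF cycle_darts_subset twin_in_cycle_darts[OF a(1)]] .
  then have "twin ?a \<in> orbit \<rho> ?a" using rho_orbit[OF a(2)] fst_twin[OF a(1)] by simp
  from mem_arc_iff_apply[OF finite_perm_rho a(2) d this twin_neq[OF a(1)]]
  show ?thesis unfolding rotation_half_def .
qed

lemma cut_vertex_cut_rot:
  assumes z: "z \<in> cut_darts"
  shows "cut_vertex (cut_rot z) = cut_vertex z"
proof (cases "fst (fst z) \<in> cycle_verts")
  case False
  then show ?thesis using fst_fst_cut_rot[OF z] by (simp add: cut_vertex_def)
next
  case True
  obtain d t where dt: "z = (d, t)" by (cases z)
  let ?v = "fst d" and ?a = "base_dart (fst d)"
  have v: "?v \<in> cycle_verts" using True dt by simp
  have X: "?a \<in> cycle_darts" using base_dart[OF v] by blast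
  note a = X twin_in_cycle_darts[OF X] twin_neq[OF X] twin_twin[OF X]
    base_dart_in_rotation_half[OF v] twin_base_dart_notin_rotation_half[of ?v]
  have "(fst (cut_rot z) \<in> rotation_half ?v) \<noteq> snd (cut_rot z) \<longleftrightarrow> (d \<in> rotation_half ?v) \<noteq> t"
  proof (cases t)
    case True
    then have "d = ?a \<or> d = twin ?a" using z dt cycle_dart_at_cycle_vertex[OF v] by (simp add: mem_cut_darts)
    then show ?thesis using True dt a by (auto simp: cut_rot_def)
  next
    case False
    then have dD: "d \<in> D" using z dt by (simp add: mem_cut_darts)
    then have "\<rho> d \<in> cycle_darts \<longrightarrow> \<rho> d = ?a \<or> \<rho> d = twin ?a"
      using cycle_dart_at_cycle_vertex[OF v] fst_rho by simp
    then show ?thesis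
      using False dt mem_rotation_half_iff[OF v dD] a by (auto simp: cut_rot_def)
  qed
  then show ?thesis using fst_fst_cut_rot[OF z] dt by (simp add: cut_vertex_def)
qed

lemma exists_dart_at:
  assumes "v \<in> V"
  shows "\<exists>d\<in>D. fst d = v"
proof -
  obtain C where C: "C \<in> Cs" using nonempty by blast
  have len: "0 < length C" "1 < length C" using cycle_length[OF C] by auto
  then have "C ! 0 \<noteq> C ! 1" using nth_eq_iff_index_eq[OF cycle_distinct[OF C]] by fastforce
  moreover have "C ! 0 \<in> V" "C ! 1 \<in> V"
    using len nth_mem cycle[OF C] by (fastforce simp: is_cycle_def)+
  ultimately obtain u where "u \<in> V" "u \<noteq> v" by metis
  then obtain w where "E v w" using connected_graph_dart_from[OF connected assms] by blast
  then show ?thesis by (auto simp: darts_def)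
qed

lemma cut_vertex_image: "V \<times> {False} \<union> cycle_verts \<times> {True} \<subseteq> cut_vertex ` cut_darts"
proof -
  have "(v, t) \<in> cut_vertex ` cut_darts" if "v \<in> cycle_verts" for v t
  proof -
    let ?a = "base_dart v"
    have a: "?a \<in> cycle_darts" "fst ?a = v" using base_dart that by auto
    let ?d = "if t then ?a else twin ?a"
    have "(?d, False) \<in> cut_darts"
      using a(1) twin_in_cycle_darts[OF a(1)] cycle_darts_subset by (auto simp: mem_cut_darts)
    moreover have "cut_vertex (?d, False) = (v, t)"
      using that a fst_twin base_dart_in_rotation_half twin_base_dart_notin_rotation_half
      by (simp add: cut_vertex_def)
    ultimately show ?thesis by (metis image_eqI)
  qed
  moreover have "(v, False) \<in> cut_vertex ` cut_darts" if v: "v \<in> V" "v \<notin> cycle_verts" for v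
  proof -
    obtain d where "d \<in> D" "fst d = v" using exists_dart_at[OF v(1)] by blast
    then have "(d, False) \<in> cut_darts" "cut_vertex (d, False) = (v, False)"
      using v(2) by (auto simp: mem_cut_darts cut_vertex_def)
    then show ?thesis by (metis image_eqI)
  qed
  ultimately show ?thesis by blast
qed

lemma card_orbits_cut_rot: "card V + card cycle_verts \<le> card (orbits cut_rot cut_darts)"
proof -
  have finV: "finite V" using simple by (simp add: simple_graph_def)
  have "card V + card cycle_verts = card (V \<times> {False} \<union> cycle_verts \<times> {True})"
    using finV finite_subset[OF cycle_verts_subset finV]
    by (subst card_Un_disjoint) (auto simp: card_cartesian_product)
  also have "\<dots> \<le> card (cut_vertex ` cut_darts)"
    using finite_cut_darts cut_vertex_image by (intro card_mono) auto
  also have "\<dots> \<le> card (orbits cut_rot cut_darts)"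
    using finite_perm_cut_rot cut_vertex_cut_rot by (rule card_image_le_card_orbits)
  finally show ?thesis .
qed

definition cycle_side :: "'v \<times> 'v \<Rightarrow> 'v list \<times> bool" where
  "cycle_side e = (SOME Cb. fst Cb \<in> Cs \<and> (\<exists>i<length (fst Cb). e = cyc_dart (fst Cb) (snd Cb) i))"

lemma cycle_side_cyc_dart:
  assumes "C \<in> Cs" "i < length C"
  shows "cycle_side (cyc_dart C b i) = (C, b)"
  unfolding cycle_side_def
proof (rule some_equality)
  fix Cb assume "fst Cb \<in> Cs \<and> (\<exists>i'<length (fst Cb). cyc_dart C b i = cyc_dart (fst Cb) (snd Cb) i')"
  then show "Cb = (C, b)" using cyc_dart_eq_iff_family[OF assms(1) _ assms(2)] by (cases Cb) auto
qed (use assms in auto)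

definition cut_face :: "('v \<times> 'v) \<times> bool \<Rightarrow> ('v \<times> 'v) set + 'v list \<times> bool" where
  "cut_face z = (if fst z \<in> cycle_darts \<and> \<not> snd z then Inr (cycle_side (fst z))
    else Inl (orbit (face_perm \<rho>) (fst z)))"

lemma cut_face_step:
  assumes z: "z \<in> cut_darts"
  shows "cut_face ((cut_rot \<circ> cut_rev) z) = cut_face z"
proof -
  obtain d t where dt: "z = (d, t)" by (cases z)
  show ?thesis
  proof (cases "d \<in> cycle_darts \<and> \<not> t")
    case True
    then obtain C b i where C: "C \<in> Cs" "i < length C" "d = cyc_dart C b i"
      by (auto elim: cycle_dartsE)
    have "(cut_rot \<circ> cut_rev) z = (cyc_dart C b (cyc_step C b i), False)"
      using True dt C twin_rev_cyc_dart[OF C(1,2)] rev_cycle_dart[of d]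
      by (simp add: cut_rot_def cut_rev_def)
    then show ?thesis
      using True dt C cyc_dart_in_cycle_darts[OF C(1) cyc_step_lt[OF C(2)]]
      by (simp add: cut_face_def cycle_side_cyc_dart cyc_step_lt)
  next
    case False
    then have dD: "d \<in> D" and t: "t = (d \<in> cycle_darts)"
      using z dt cycle_darts_subset by (auto simp: mem_cut_darts split: if_splits)
    have "(cut_rot \<circ> cut_rev) z = (face_perm \<rho> d, face_perm \<rho> d \<in> cycle_darts)"
      using dt t rev_cycle_dart[of "rev_dart d"] by (simp add: cut_rot_def cut_rev_def face_perm_def)
    moreover have "orbit (face_perm \<rho>) (face_perm \<rho> d) = orbit (face_perm \<rho>) d"
      using orbit_eq[OF finite_perm_face_perm dD apply_in_orbit] .
    ultimately show ?thesis using False dt by (simp add: cut_face_def)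
  qed
qed

lemma finite_Cs: "finite Cs"
proof -
  have "0 < length C" if "C \<in> Cs" for C using cycle_length[OF that] by linarith
  then have "inj_on (\<lambda>C. cyc_dart C True 0) Cs"
    using cyc_dart_eq_iff_family by (intro inj_onI) blast
  moreover have "(\<lambda>C. cyc_dart C True 0) ` Cs \<subseteq> D"
    using cycle_length cyc_dart_in_cycle_darts cycle_darts_subset by fastforce
  ultimately show ?thesis using finite_D by (meson finite_imageD finite_subset)
qed

lemma card_orbits_cut_face:
  "card (faces E \<rho>) + 2 * card Cs \<le> card (orbits (cut_rot \<circ> cut_rev) cut_darts)"
proof -
  have "Inl ` faces E \<rho> \<subseteq> cut_face ` cut_darts"
  proof
    fix F :: "('v \<times> 'v) set + 'v list \<times> bool" assume "F \<in> Inl ` faces E \<rho>"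
    then obtain d where d: "d \<in> D" "F = Inl (orbit (face_perm \<rho>) d)" by (auto simp: faces_def)
    then have "(d, d \<in> cycle_darts) \<in> cut_darts" "cut_face (d, d \<in> cycle_darts) = F"
      by (auto simp: mem_cut_darts cut_face_def)
    then show "F \<in> cut_face ` cut_darts" by (metis image_eqI)
  qed
  moreover have "Inr ` (Cs \<times> UNIV) \<subseteq> cut_face ` cut_darts"
  proof
    fix F :: "('v \<times> 'v) set + 'v list \<times> bool" assume "F \<in> Inr ` (Cs \<times> UNIV)"
    then obtain C b where C: "C \<in> Cs" "F = Inr (C, b)" by auto
    have "0 < length C" using cycle_length[OF C(1)] by linarith
    then have "(cyc_dart C b 0, False) \<in> cut_darts" "cut_face (cyc_dart C b 0, False) = F"
      using C cyc_dart_in_cycle_darts cycle_darts_subset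
      by (auto simp: mem_cut_darts cut_face_def cycle_side_cyc_dart)
    then show "F \<in> cut_face ` cut_darts" by (metis image_eqI)
  qed
  ultimately have "card (Inl ` faces E \<rho> \<union> Inr ` (Cs \<times> (UNIV :: bool set))) \<le> card (cut_face ` cut_darts)"
    using finite_cut_darts by (intro card_mono) auto
  moreover have "card (Inl ` faces E \<rho> \<union> Inr ` (Cs \<times> (UNIV :: bool set))) = card (faces E \<rho>) + 2 * card Cs"
    using finite_D finite_Cs
    by (subst card_Un_disjoint) (auto simp: faces_def card_image card_cartesian_product)
  moreover have "card (cut_face ` cut_darts) \<le> card (orbits (cut_rot \<circ> cut_rev) cut_darts)"
    using finite_perm_comp[OF finite_perm_cut_rot finite_perm_cut_rev] cut_face_step
    by (rule card_image_le_card_orbits)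
  ultimately show ?thesis by linarith
qed

lemma facial_if_cyc_dart_face:
  assumes "cyc_dart C c ` {..<length C} \<in> faces E \<rho>"
  shows "facial E \<rho> C"
  using assms cyc_darts_forward[of C] cyc_darts_rev[of C] by (cases c) (simp_all add: facial_def)

text \<open>If all darts of one side of a cycle continued along the cycle under \<open>\<rho>\<close>, the
  other side would be traced by a face, so a non-facial cycle has an exit on each side.\<close>

lemma nonfacial_exit:
  assumes C: "C \<in> Cs" and nf: "\<not> facial E \<rho> C"
  shows "\<exists>i<length C. \<rho> (cyc_dart C b i) \<notin> cycle_darts"
proof (rule ccontr)
  let ?c = "\<not> b" and ?n = "length C"
  assume "\<not> ?thesis"
  then have "\<rho> (cyc_dart C b i) = cyc_dart C ?c i" if "i < ?n" for i
    using rho_cycle_dart[OF cyc_dart_in_cycle_darts[OF C that]] twin_cyc_dart[OF C that] that by auto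
  then have step: "face_perm \<rho> (cyc_dart C ?c j) = cyc_dart C ?c (cyc_step C ?c j)" if "j < ?n" for j
    using that rev_cyc_dart[OF that, of ?c] cyc_step_lt[OF that, of ?c]
      cyc_step_cyc_step[OF cyc_step_lt[OF that, of ?c], of b]
    by (simp add: face_perm_def)
  have n: "0 < ?n" using cycle_length[OF C] by linarith
  have "orbit (face_perm \<rho>) (cyc_dart C ?c 0) = cyc_dart C ?c ` {..<?n}"
  proof
    show "orbit (face_perm \<rho>) (cyc_dart C ?c 0) \<subseteq> cyc_dart C ?c ` {..<?n}"
    proof (rule orbit_subset)
      fix e assume "e \<in> cyc_dart C ?c ` {..<?n}"
      then obtain j where "j < ?n" "e = cyc_dart C ?c j" by blast
      then show "face_perm \<rho> e \<in> cyc_dart C ?c ` {..<?n}"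
        using step cyc_step_lt by (metis image_eqI lessThan_iff)
    qed (use n in simp)
    show "cyc_dart C ?c ` {..<?n} \<subseteq> orbit (face_perm \<rho>) (cyc_dart C ?c 0)"
    proof
      fix e assume "e \<in> cyc_dart C ?c ` {..<?n}"
      then obtain j where j: "j < ?n" "e = cyc_dart C ?c j" by blast
      have "cyc_dart C ?c j \<in> orbit (face_perm \<rho>) (cyc_dart C ?c 0)"
        by (rule cyc_step_induct[of 0 C _ ?c, OF n self_in_orbit _ j(1)]) (metis orbit_step step)
      then show "e \<in> orbit (face_perm \<rho>) (cyc_dart C ?c 0)" using j(2) by simp
    qed
  qed
  then have "cyc_dart C ?c ` {..<?n} \<in> faces E \<rho>"
    using cyc_dart_in_darts[OF simple cycle[OF C] n] unfolding faces_def by (metis image_eqI)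
  then show False using facial_if_cyc_dart_face nf by blast
qed

abbreviation cut_conn :: "('v \<times> 'v) \<times> bool \<Rightarrow> ('v \<times> 'v) \<times> bool \<Rightarrow> bool" where
  "cut_conn \<equiv> equivclp (schreier_rel cut_rot cut_rev cut_darts)"

lemma cut_conn_rot: "z \<in> cut_darts \<Longrightarrow> cut_conn z (cut_rot z)"
  by (intro r_into_equivclp) (simp add: schreier_rel_def)

lemma cut_conn_rev: "z \<in> cut_darts \<Longrightarrow> cut_conn z (cut_rev z)"
  by (intro r_into_equivclp) (simp add: schreier_rel_def)

lemma cut_conn_around_vertex:
  assumes d: "d \<in> D" "d' \<in> D" "fst d = fst d'" and out: "fst d \<notin> cycle_verts"
  shows "cut_conn (d, False) (d', False)"
proof -
  have "cut_conn (d, False) ((\<rho> ^^ k) d, False) \<and> (\<rho> ^^ k) d \<in> D \<and> fst ((\<rho> ^^ k) d) = fst d" for k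
  proof (induction k)
    case (Suc k)
    let ?e = "(\<rho> ^^ k) d"
    have "\<rho> ?e \<notin> cycle_darts" using Suc fst_cycle_dart fst_rho out by metis
    then have "cut_rot (?e, False) = (\<rho> ?e, False)" by (simp add: cut_rot_def)
    then have "cut_conn (?e, False) (\<rho> ?e, False)"
      using cut_conn_rot[of "(?e, False)"] Suc by (simp add: mem_cut_darts)
    then show ?case using Suc rho_in fst_rho equivclp_trans by auto
  qed (use d in simp)
  moreover obtain k where "d' = (\<rho> ^^ k) d" using rho_orbit[OF d] by (auto simp: orbit_iff)
  ultimately show ?thesis by simp
qed

lemma cut_conn_outside:
  assumes d: "d \<in> D" "fst d \<in> V - cycle_verts" and d': "d' \<in> D" "fst d' \<in> V - cycle_verts"
  shows "cut_conn (d, False) (d', False)"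
proof -
  have "(\<lambda>x y. E x y \<and> x \<in> V - cycle_verts \<and> y \<in> V - cycle_verts)\<^sup>*\<^sup>* (fst d) (fst d')"
    using outside_connected d d' by (simp add: connected_set_def)
  then have "\<forall>e\<in>D. fst e = fst d' \<longrightarrow> cut_conn (d, False) (e, False)"
  proof (induction rule: rtranclp_induct)
    case base
    then show ?case using cut_conn_around_vertex[OF d(1)] d(2) by simp
  next
    case (step w w')
    have ww': "(w, w') \<in> D" "(w', w) \<in> D" using step.hyps(2) simple
      by (auto simp: darts_def simple_graph_def)
    have "(w, w') \<notin> cycle_darts" using fst_cycle_dart step.hyps(2) by fastforce
    then have "cut_rev ((w, w'), False) = ((w', w), False)" by (simp add: cut_rev_def rev_dart_def)
    moreover have "cut_conn (d, False) ((w, w'), False)" using step.IH ww'(1) by simp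
    ultimately have "cut_conn (d, False) ((w', w), False)"
      using cut_conn_rev[of "((w, w'), False)"] ww'(1) equivclp_trans by (metis mem_cut_darts)
    then show ?case
      using cut_conn_around_vertex[OF ww'(2)] step.hyps(2) equivclp_trans by fastforce
  qed
  then show ?thesis using d' by blast
qed

lemma cut_conn_noncycle:
  assumes d: "d \<in> D" "d \<notin> cycle_darts" and d': "d' \<in> D" "fst d' \<in> V - cycle_verts"
  shows "cut_conn (d, False) (d', False)"
proof (cases "fst d \<in> cycle_verts")
  case False
  have "fst d \<in> V" using d(1) simple by (auto simp: darts_def simple_graph_def)
  then show ?thesis using cut_conn_outside[OF d(1) _ d'] False by simp
next
  case True
  have "rev_dart d \<in> D" "fst (rev_dart d) \<in> V - cycle_verts"
    using rev_dart_in_darts[OF simple d(1)] noncycle_dart_leaves[OF d True] by (auto simp: rev_dart_def)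
  then have "cut_conn (rev_dart d, False) (d', False)" using cut_conn_outside[OF _ _ d'] by blast
  moreover have "cut_conn (d, False) (rev_dart d, False)"
    using cut_conn_rev[of "(d, False)"] d by (simp add: cut_rev_def mem_cut_darts)
  ultimately show ?thesis by (rule equivclp_trans[rotated])
qed

lemma cut_conn_cycle:
  assumes C: "C \<in> Cs" "\<not> facial E \<rho> C" and j: "j < length C"
    and d': "d' \<in> D" "fst d' \<in> V - cycle_verts"
  shows "cut_conn (cyc_dart C b j, False) (d', False)"
proof -
  obtain i where i: "i < length C" "\<rho> (cyc_dart C b i) \<notin> cycle_darts"
    using nonfacial_exit[OF C] by blast
  have D: "cyc_dart C b k \<in> D" if "k < length C" for k
    using cyc_dart_in_cycle_darts[OF C(1) that] cycle_darts_subset by blast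
  show ?thesis
  proof (rule cyc_step_induct[of i C _ b, OF i(1) _ _ j])
    have "cut_rot (cyc_dart C b i, False) = (\<rho> (cyc_dart C b i), False)"
      using i(2) by (simp add: cut_rot_def)
    then have "cut_conn (cyc_dart C b i, False) (\<rho> (cyc_dart C b i), False)"
      using cut_conn_rot[of "(cyc_dart C b i, False)"] D[OF i(1)] by (simp add: mem_cut_darts)
    moreover have "cut_conn (\<rho> (cyc_dart C b i), False) (d', False)"
      using cut_conn_noncycle[OF rho_in[OF D[OF i(1)]] i(2) d'] .
    ultimately show "cut_conn (cyc_dart C b i, False) (d', False)" by (rule equivclp_trans)
  next
    fix k assume k: "k < length C" "cut_conn (cyc_dart C b k, False) (d', False)"
    let ?r = "rev_dart (cyc_dart C b k)"
    have X: "cyc_dart C b k \<in> cycle_darts" "?r \<in> cycle_darts"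
      using cyc_dart_in_cycle_darts[OF C(1) k(1)] rev_cycle_dart by auto
    have "cut_conn (?r, True) (cyc_dart C b k, False)"
      using cut_conn_rev[of "(cyc_dart C b k, False)"] X D[OF k(1)] equivclp_sym
      by (simp add: cut_rev_def mem_cut_darts)
    moreover have "cut_conn (?r, True) (cyc_dart C b (cyc_step C b k), False)"
      using cut_conn_rot[of "(?r, True)"] X twin_rev_cyc_dart[OF C(1) k(1)]
      by (simp add: cut_rot_def mem_cut_darts)
    ultimately show "cut_conn (cyc_dart C b (cyc_step C b k), False) (d', False)"
      using k(2) by (meson equivclp_sym equivclp_trans)
  qed
qed

lemma exists_outside_dart:
  assumes "C \<in> Cs" "\<not> facial E \<rho> C"
  obtains d0 where "d0 \<in> D" "fst d0 \<in> V - cycle_verts"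
proof -
  obtain i where i: "i < length C" "\<rho> (cyc_dart C True i) \<notin> cycle_darts"
    using nonfacial_exit[OF assms] by blast
  let ?d = "\<rho> (cyc_dart C True i)"
  have X: "cyc_dart C True i \<in> cycle_darts" using cyc_dart_in_cycle_darts[OF assms(1) i(1)] .
  then have cD: "cyc_dart C True i \<in> D" using cycle_darts_subset by blast
  have d: "?d \<in> D" "fst ?d \<in> cycle_verts"
    using rho_in[OF cD] fst_rho[OF cD] fst_cycle_dart[OF X] by auto
  have "rev_dart ?d \<in> D" "fst (rev_dart ?d) \<in> V - cycle_verts"
    using rev_dart_in_darts[OF simple d(1)] noncycle_dart_leaves[OF d(1) i(2) d(2)]
    by (auto simp: rev_dart_def)
  then show ?thesis using that by blast
qed

lemma cut_conn_to_outside: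
  assumes nf: "\<forall>C\<in>Cs. \<not> facial E \<rho> C" and d0: "d0 \<in> D" "fst d0 \<in> V - cycle_verts"
    and z: "z \<in> cut_darts"
  shows "cut_conn z (d0, False)"
proof -
  have unflagged: "cut_conn (d, False) (d0, False)" if "d \<in> D" for d
  proof (cases "d \<in> cycle_darts")
    case True
    then obtain C b j where "C \<in> Cs" "j < length C" "d = cyc_dart C b j" by (rule cycle_dartsE)
    then show ?thesis using cut_conn_cycle d0 nf by blast
  qed (use cut_conn_noncycle d0 that in blast)
  obtain d t where dt: "z = (d, t)" by (cases z)
  show ?thesis
  proof (cases t)
    case True
    then have X: "d \<in> cycle_darts" using z dt by (simp add: mem_cut_darts)
    then have "rev_dart d \<in> D" using rev_cycle_dart cycle_darts_subset by blast
    moreover have "cut_conn z (rev_dart d, False)"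
      using cut_conn_rev[of "(d, True)"] X True dt by (simp add: mem_cut_darts cut_rev_def)
    ultimately show ?thesis using unflagged equivclp_trans by metis
  next
    case False
    then show ?thesis using z dt unflagged by (simp add: mem_cut_darts)
  qed
qed

theorem card_le_genus:
  assumes embedding: "orientable_embedding V E \<rho> g" and nf: "\<forall>C\<in>Cs. \<not> facial E \<rho> C"
  shows "card Cs \<le> g"
proof -
  obtain C where "C \<in> Cs" using nonempty by blast
  then obtain d0 where d0: "d0 \<in> D" "fst d0 \<in> V - cycle_verts"
    using exists_outside_dart nf by blast
  have "(d0, False) \<in> cut_darts" using d0 by (simp add: mem_cut_darts)
  moreover have "cut_conn (d0, False) z" if "z \<in> cut_darts" for z
    using equivclp_sym[OF cut_conn_to_outside[OF nf d0 that]] .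
  ultimately have euler: "card (orbits cut_rot cut_darts) + card (orbits cut_rev cut_darts)
      + card (orbits (cut_rot \<circ> cut_rev) cut_darts) \<le> card cut_darts + 2"
    by (rule hypermap_euler_ineq_connected[OF finite_perm_cut_rot finite_perm_cut_rev])
  have "D \<noteq> {}" using d0 by blast
  then have "int (card V) - int (card (edges E)) + int (card (faces E \<rho>)) = 2 - 2 * int g"
    using embedding by (simp add: orientable_embedding_def num_faces_def)
  then show ?thesis
    using euler card_orbits_cut_rot card_orbits_cut_rev card_orbits_cut_face card_cut_darts
      card_cycle_darts_le card_darts_le[OF simple] by linarith
qed

end

theorem lemma2:
  fixes V :: "'v set" and E :: "'v \<Rightarrow> 'v \<Rightarrow> bool"
    and \<rho> :: "'v \<times> 'v \<Rightarrow> 'v \<times> 'v" and g :: nat and \<C> :: "'v list set"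
  assumes "orientable_embedding V E \<rho> g"
    and "peripheral_family V E \<C>"
    and "\<forall>C\<in>\<C>. \<not> facial E \<rho> C"
  shows "card \<C> \<le> g"
proof (cases "\<C> = {}")
  case False
  then interpret peripheral_cut V E \<rho> \<C>
    using assms by unfold_locales (auto simp: orientable_embedding_def)
  show ?thesis using card_le_genus assms(1,3) .
qed simp

end
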